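(* Let $\mathcal{C}$ be a Fraïssé class with Fraïssé limit $\mathbf{U}$ and let $\mathbf{V},\mathbf{W}\in\overline{\mathcal{C}}$. If $r:\mathbf{U}\twoheadrightarrow\mathbf{V}$ is a universal homogeneous retraction and $s:\mathbf{V}\twoheadrightarrow\mathbf{W}$ is any retraction, then there exists a universal homogeneous retraction $\hat s:\mathbf{U}\twoheadrightarrow\mathbf{W}$.
   Context: An embedding is an injective homomorphism reflecting all relations. An age is a class of finitely generated structures of one signature with countably many isomorphism types, closed under finitely generated substructures (up to isomorphism) and with the joint embedding property; $\overline{\mathcal{C}}$ is the class of countable structures all of whose finitely generated substructures are isomorphic to members of $\mathcal{C}$; a Fraïssé class is an age with the amalgamation property, and its Fraïssé limit is the unique countable homogeneous structure with that age. A homomorphism $r:\mathbf{A}\to\mathbf{B}$ is a retraction if some homomorphism $\iota:\mathbf{B}\to\mathbf{A}$ satisfies $r\circ\iota=1_{\mathbf{B}}$. A universal homogeneous retraction $r:\mathbf{U}\twoheadrightarrow\mathbf{T}$ is a retraction such that (universality) for every $\mathbf{A}\in\overline{\operatorname{Age}(\mathbf{U})}$ and homomorphism $h:\mathbf{A}\to\mathbf{T}$ there is an embedding $\iota:\mathbf{A}\hookrightarrow\mathbf{U}$ with $h=r\circ\iota$, and (homogeneity) for every finitely generated $\mathbf{A}\le\mathbf{U}$ and embedding $\iota:\mathbf{A}\hookrightarrow\mathbf{U}$ with $r\circ\iota=r\restriction_A$ there is an automorphism $\alpha$ of $\mathbf{U}$ with $r\circ\alpha=r$ and $\alpha\restriction_A=\iota$.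 *)

theory Defs
  imports Main "HOL-Library.Countable_Set"
begin

text \<open>A signature is given by the arities of its function symbols (type 'f)
and of its relation symbols (type 'r). Constants are 0-ary function symbols.\<close>

type_synonym ('f,'r) signature = "('f \<Rightarrow> nat) \<times> ('r \<Rightarrow> nat)"

definition farity :: "('f,'r) signature \<Rightarrow> 'f \<Rightarrow> nat" where "farity \<sigma> = fst \<sigma>"
definition rarity :: "('f,'r) signature \<Rightarrow> 'r \<Rightarrow> nat" where "rarity \<sigma> = snd \<sigma>"

record ('a,'f,'r) struct =
  car :: "'a set"
  fun_of :: "'f \<Rightarrow> 'a list \<Rightarrow> 'a"
  rel_of :: "'r \<Rightarrow> 'a list \<Rightarrow> bool"

definition wf_struct :: "('f,'r) signature \<Rightarrow> ('a,'f,'r) struct \<Rightarrow> bool" where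
  "wf_struct \<sigma> A \<longleftrightarrow>
     (\<forall>f xs. length xs = farity \<sigma> f \<and> set xs \<subseteq> car A \<longrightarrow> fun_of A f xs \<in> car A)"

definition hom :: "('f,'r) signature \<Rightarrow> ('a,'f,'r) struct \<Rightarrow> ('b,'f,'r) struct \<Rightarrow> ('a \<Rightarrow> 'b) \<Rightarrow> bool" where
  "hom \<sigma> A B h \<longleftrightarrow>
     (\<forall>x\<in>car A. h x \<in> car B) \<and>
     (\<forall>f xs. length xs = farity \<sigma> f \<and> set xs \<subseteq> car A \<longrightarrow>
        h (fun_of A f xs) = fun_of B f (map h xs)) \<and>
     (\<forall>R xs. length xs = rarity \<sigma> R \<and> set xs \<subseteq> car A \<and> rel_of A R xs \<longrightarrow>
        rel_of B R (map h xs))"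

definition emb :: "('f,'r) signature \<Rightarrow> ('a,'f,'r) struct \<Rightarrow> ('b,'f,'r) struct \<Rightarrow> ('a \<Rightarrow> 'b) \<Rightarrow> bool" where
  "emb \<sigma> A B h \<longleftrightarrow> hom \<sigma> A B h \<and> inj_on h (car A) \<and>
     (\<forall>R xs. length xs = rarity \<sigma> R \<and> set xs \<subseteq> car A \<and> rel_of B R (map h xs) \<longrightarrow>
        rel_of A R xs)"

definition iso :: "('f,'r) signature \<Rightarrow> ('a,'f,'r) struct \<Rightarrow> ('b,'f,'r) struct \<Rightarrow> ('a \<Rightarrow> 'b) \<Rightarrow> bool" where
  "iso \<sigma> A B h \<longleftrightarrow> emb \<sigma> A B h \<and> bij_betw h (car A) (car B)"

definition isomorphic :: "('f,'r) signature \<Rightarrow> ('a,'f,'r) struct \<Rightarrow> ('b,'f,'r) struct \<Rightarrow> bool" where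
  "isomorphic \<sigma> A B \<longleftrightarrow> (\<exists>h. iso \<sigma> A B h)"

definition automorphism :: "('f,'r) signature \<Rightarrow> ('a,'f,'r) struct \<Rightarrow> ('a \<Rightarrow> 'a) \<Rightarrow> bool" where
  "automorphism \<sigma> A h \<longleftrightarrow> iso \<sigma> A A h"

definition substruct :: "('f,'r) signature \<Rightarrow> ('a,'f,'r) struct \<Rightarrow> ('a,'f,'r) struct \<Rightarrow> bool" where
  "substruct \<sigma> A B \<longleftrightarrow> wf_struct \<sigma> A \<and> car A \<subseteq> car B \<and>
     (\<forall>f xs. length xs = farity \<sigma> f \<and> set xs \<subseteq> car A \<longrightarrow> fun_of A f xs = fun_of B f xs) \<and>
     (\<forall>R xs. length xs = rarity \<sigma> R \<and> set xs \<subseteq> car A \<longrightarrow> (rel_of A R xs \<longleftrightarrow> rel_of B R xs))"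

inductive_set generated :: "('f,'r) signature \<Rightarrow> ('a,'f,'r) struct \<Rightarrow> 'a set \<Rightarrow> 'a set"
  for \<sigma> A X where
  gen_base: "x \<in> X \<Longrightarrow> x \<in> generated \<sigma> A X"
| gen_fun: "length xs = farity \<sigma> f \<Longrightarrow> (\<forall>y\<in>set xs. y \<in> generated \<sigma> A X) \<Longrightarrow>
             fun_of A f xs \<in> generated \<sigma> A X"

definition fin_gen :: "('f,'r) signature \<Rightarrow> ('a,'f,'r) struct \<Rightarrow> bool" where
  "fin_gen \<sigma> A \<longleftrightarrow> (\<exists>X. finite X \<and> X \<subseteq> car A \<and> generated \<sigma> A X = car A)"

text \<open>Classes of structures are represented by sets of structures with carrier
in nat (every countable structure has an isomorphic copy of this form); all
class-membership conditions are up to isomorphism.\<close>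

definition Age :: "('f,'r) signature \<Rightarrow> ('u,'f,'r) struct \<Rightarrow> (nat,'f,'r) struct set" where
  "Age \<sigma> U = {A. wf_struct \<sigma> A \<and> fin_gen \<sigma> A \<and>
               (\<exists>B. substruct \<sigma> B U \<and> fin_gen \<sigma> B \<and> isomorphic \<sigma> A B)}"

definition in_cbar :: "('f,'r) signature \<Rightarrow> (nat,'f,'r) struct set \<Rightarrow> ('a,'f,'r) struct \<Rightarrow> bool" where
  "in_cbar \<sigma> C A \<longleftrightarrow> wf_struct \<sigma> A \<and> countable (car A) \<and>
     (\<forall>B. substruct \<sigma> B A \<and> fin_gen \<sigma> B \<longrightarrow> (\<exists>D\<in>C. isomorphic \<sigma> B D))"

definition is_age :: "('f,'r) signature \<Rightarrow> (nat,'f,'r) struct set \<Rightarrow> bool" where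
  "is_age \<sigma> C \<longleftrightarrow>
     (\<forall>A\<in>C. wf_struct \<sigma> A \<and> fin_gen \<sigma> A) \<and>
     (\<exists>g :: nat \<Rightarrow> (nat,'f,'r) struct. \<forall>A\<in>C. \<exists>n. isomorphic \<sigma> A (g n)) \<and>
     (\<forall>A\<in>C. \<forall>B. substruct \<sigma> B A \<and> fin_gen \<sigma> B \<longrightarrow> (\<exists>D\<in>C. isomorphic \<sigma> B D)) \<and>
     (\<forall>A\<in>C. \<forall>B\<in>C. \<exists>D\<in>C. (\<exists>f. emb \<sigma> A D f) \<and> (\<exists>g. emb \<sigma> B D g))"

definition amalgamation :: "('f,'r) signature \<Rightarrow> (nat,'f,'r) struct set \<Rightarrow> bool" where
  "amalgamation \<sigma> C \<longleftrightarrow>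
     (\<forall>A\<in>C. \<forall>B\<in>C. \<forall>B'\<in>C. \<forall>f g. emb \<sigma> A B f \<and> emb \<sigma> A B' g \<longrightarrow>
        (\<exists>D\<in>C. \<exists>f' g'. emb \<sigma> B D f' \<and> emb \<sigma> B' D g' \<and>
           (\<forall>x\<in>car A. f' (f x) = g' (g x))))"

definition fraisse_class :: "('f,'r) signature \<Rightarrow> (nat,'f,'r) struct set \<Rightarrow> bool" where
  "fraisse_class \<sigma> C \<longleftrightarrow> is_age \<sigma> C \<and> amalgamation \<sigma> C"

definition homogeneous :: "('f,'r) signature \<Rightarrow> ('u,'f,'r) struct \<Rightarrow> bool" where
  "homogeneous \<sigma> U \<longleftrightarrow>
     (\<forall>A B f. substruct \<sigma> A U \<and> fin_gen \<sigma> A \<and> substruct \<sigma> B U \<and> fin_gen \<sigma> B \<and>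
        iso \<sigma> A B f \<longrightarrow> (\<exists>\<alpha>. automorphism \<sigma> U \<alpha> \<and> (\<forall>x\<in>car A. \<alpha> x = f x)))"

definition fraisse_limit :: "('f,'r) signature \<Rightarrow> (nat,'f,'r) struct set \<Rightarrow> ('u,'f,'r) struct \<Rightarrow> bool" where
  "fraisse_limit \<sigma> C U \<longleftrightarrow> wf_struct \<sigma> U \<and> countable (car U) \<and> homogeneous \<sigma> U \<and>
     (\<forall>A\<in>C. \<exists>B. substruct \<sigma> B U \<and> fin_gen \<sigma> B \<and> isomorphic \<sigma> A B) \<and>
     (\<forall>B. substruct \<sigma> B U \<and> fin_gen \<sigma> B \<longrightarrow> (\<exists>A\<in>C. isomorphic \<sigma> B A))"

definition retraction :: "('f,'r) signature \<Rightarrow> ('a,'f,'r) struct \<Rightarrow> ('b,'f,'r) struct \<Rightarrow> ('a \<Rightarrow> 'b) \<Rightarrow> bool" where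
  "retraction \<sigma> A B r \<longleftrightarrow> hom \<sigma> A B r \<and>
     (\<exists>\<iota>. hom \<sigma> B A \<iota> \<and> (\<forall>y\<in>car B. r (\<iota> y) = y))"

definition uh_retraction :: "('f,'r) signature \<Rightarrow> ('u,'f,'r) struct \<Rightarrow> ('t,'f,'r) struct \<Rightarrow> ('u \<Rightarrow> 't) \<Rightarrow> bool" where
  "uh_retraction \<sigma> U T r \<longleftrightarrow> retraction \<sigma> U T r \<and>
     (\<forall>A :: (nat,'f,'r) struct. \<forall>h. in_cbar \<sigma> (Age \<sigma> U) A \<and> hom \<sigma> A T h \<longrightarrow>
        (\<exists>\<iota>. emb \<sigma> A U \<iota> \<and> (\<forall>x\<in>car A. h x = r (\<iota> x)))) \<and>
     (\<forall>A \<iota>. substruct \<sigma> A U \<and> fin_gen \<sigma> A \<and> emb \<sigma> A U \<iota> \<and> (\<forall>x\<in>car A. r (\<iota> x) = r x) \<longrightarrow>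
        (\<exists>\<alpha>. automorphism \<sigma> U \<alpha> \<and> (\<forall>x\<in>car U. r (\<alpha> x) = r x) \<and>
             (\<forall>x\<in>car A. \<alpha> x = \<iota> x)))"

end

theory Submission
  imports Defs
begin

text \<open>The composite \<open>s \<circ> r\<close> is a universal retraction, but it need not be homogeneous.
  The required retraction \<open>s'\<close> is built as the limit of homomorphisms \<open>\<tau>\<^sub>0 = s \<circ> r, \<tau>\<^sub>1, \<dots>\<close>
  from \<open>U\<close> to \<open>W\<close>, each agreeing with its predecessor on a growing finitely generated
  substructure. Stage \<open>n\<close> solves the \<open>n\<close>-th of countably many finite extension tasks: the data
  are lifted to \<open>U\<close> through \<open>r\<close> using a section \<open>j\<close> of \<open>s\<close>, and the homogeneity of \<open>r\<close> and
  of \<open>U\<close> move the lifts into place. The limit has the extension property (embeddings over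
  \<open>s'\<close> extend along finitely generated extensions), and any homomorphism with this property
  is universal, by a chain of extensions, and homogeneous, by back and forth.\<close>

abbreviation restr :: "('a,'f,'r) struct \<Rightarrow> 'a set \<Rightarrow> ('a,'f,'r) struct" where
  "restr A Y \<equiv> A\<lparr>car := Y\<rparr>"

lemma generated_cong:
  assumes "fun_of A = fun_of B" shows "generated \<sigma> A X = generated \<sigma> B X"
proof -
  have "x \<in> generated \<sigma> B X" if "x \<in> generated \<sigma> A X" "fun_of A = fun_of B" for A B and x
    using that(1)
  proof (induction rule: generated.induct)
    case (gen_fun xs f) then show ?case using that(2) by (metis generated.gen_fun)
  qed (rule generated.gen_base)
  from this[where A=A and B=B] this[where A=B and B=A] assms show ?thesis by auto
qed

lemma generated_restr [simp]: "generated \<sigma> (restr A Y) X = generated \<sigma> A X"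
  by (rule generated_cong) simp

lemma generated_fun_closed:
  "length xs = farity \<sigma> f \<Longrightarrow> set xs \<subseteq> generated \<sigma> A X \<Longrightarrow> fun_of A f xs \<in> generated \<sigma> A X"
  by (rule generated.gen_fun) auto

lemma subset_generated: "X \<subseteq> generated \<sigma> A X"
  by (auto intro: generated.gen_base)

lemma generated_subset_car:
  assumes "wf_struct \<sigma> A" "X \<subseteq> car A" shows "generated \<sigma> A X \<subseteq> car A"
proof
  fix x assume "x \<in> generated \<sigma> A X" then show "x \<in> car A"
  proof (induction rule: generated.induct)
    case (gen_fun xs f) then show ?case using assms unfolding wf_struct_def by blast
  qed (use assms in auto)
qed

lemma generated_minimal:
  assumes "Y \<subseteq> generated \<sigma> A X" shows "generated \<sigma> A Y \<subseteq> generated \<sigma> A X"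
proof
  fix x assume "x \<in> generated \<sigma> A Y" then show "x \<in> generated \<sigma> A X"
    by (induction rule: generated.induct) (use assms in \<open>auto intro: generated.intros\<close>)
qed

lemma generated_mono: "X \<subseteq> Y \<Longrightarrow> generated \<sigma> A X \<subseteq> generated \<sigma> A Y"
  by (meson generated_minimal order_trans subset_generated)

lemma wf_struct_restr_generated: "wf_struct \<sigma> (restr A (generated \<sigma> A X))"
  unfolding wf_struct_def by (auto intro: generated_fun_closed)

lemma substruct_restr_generated:
  assumes "wf_struct \<sigma> A" "X \<subseteq> car A" shows "substruct \<sigma> (restr A (generated \<sigma> A X)) A"
  using generated_subset_car[OF assms] wf_struct_restr_generated[of \<sigma> A X]
  unfolding substruct_def by auto

lemma fin_gen_restr_generated: "finite X \<Longrightarrow> fin_gen \<sigma> (restr A (generated \<sigma> A X))"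
  unfolding fin_gen_def using subset_generated[of X \<sigma> A] by auto

lemma substruct_generated:
  assumes "substruct \<sigma> A U" "generated \<sigma> A X = car A"
  shows "generated \<sigma> U X = car A"
proof -
  have fun_eq: "fun_of A f xs = fun_of U f xs" if "length xs = farity \<sigma> f" "set xs \<subseteq> car A" for f xs
    using assms(1) that unfolding substruct_def by blast
  have "x \<in> generated \<sigma> U X" if "x \<in> generated \<sigma> A X" for x
    using that
  proof (induction rule: generated.induct)
    case (gen_fun xs f)
    then have "set xs \<subseteq> car A" "set xs \<subseteq> generated \<sigma> U X" using assms(2) by auto
    then show ?case using fun_eq gen_fun(1) generated_fun_closed by metis
  qed (rule generated.gen_base)
  moreover have "x \<in> generated \<sigma> A X" if "x \<in> generated \<sigma> U X" for x
    using that
  proof (induction rule: generated.induct)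
    case (gen_fun xs f)
    then have "set xs \<subseteq> car A" using assms(2) by blast
    then show ?case using gen_fun fun_eq[of xs f] generated.gen_fun[of xs \<sigma> f A X] by simp
  qed (rule generated.gen_base)
  ultimately show ?thesis using assms(2) by blast
qed

lemma hom_closed: "hom \<sigma> A B h \<Longrightarrow> x \<in> car A \<Longrightarrow> h x \<in> car B"
  unfolding hom_def by auto

lemma hom_image_subset: "hom \<sigma> A B h \<Longrightarrow> h ` car A \<subseteq> car B"
  unfolding hom_def by auto

lemma emb_hom: "emb \<sigma> A B h \<Longrightarrow> hom \<sigma> A B h"
  unfolding emb_def by auto

lemma emb_inj_on: "emb \<sigma> A B h \<Longrightarrow> inj_on h (car A)"
  unfolding emb_def by auto

lemma iso_emb: "iso \<sigma> A B h \<Longrightarrow> emb \<sigma> A B h"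
  unfolding iso_def by auto

lemma iso_id: "iso \<sigma> A A id"
  unfolding iso_def emb_def hom_def by auto

lemma automorphism_emb: "automorphism \<sigma> U \<alpha> \<Longrightarrow> emb \<sigma> U U \<alpha>"
  unfolding automorphism_def iso_def by auto

lemma hom_comp: "hom \<sigma> A B h \<Longrightarrow> hom \<sigma> B C k \<Longrightarrow> hom \<sigma> A C (k \<circ> h)"
proof -
  assume h: "hom \<sigma> A B h" and k: "hom \<sigma> B C k"
  have into: "set (map h xs) \<subseteq> car B" if "set xs \<subseteq> car A" for xs
    using that hom_closed[OF h] by auto
  show ?thesis
    unfolding hom_def
  proof (intro conjI allI impI ballI)
    show "(k \<circ> h) x \<in> car C" if "x \<in> car A" for x
      using that hom_closed[OF h] hom_closed[OF k] by simp
    show "(k \<circ> h) (fun_of A f xs) = fun_of C f (map (k \<circ> h) xs)"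
      if "length xs = farity \<sigma> f \<and> set xs \<subseteq> car A" for f xs
      using that into[of xs] h k unfolding hom_def by (metis comp_apply length_map map_map)
    show "rel_of C R (map (k \<circ> h) xs)"
      if "length xs = rarity \<sigma> R \<and> set xs \<subseteq> car A \<and> rel_of A R xs" for R xs
      using that into[of xs] h k unfolding hom_def by (metis length_map map_map)
  qed
qed

lemma emb_comp: "emb \<sigma> A B h \<Longrightarrow> emb \<sigma> B C k \<Longrightarrow> emb \<sigma> A C (k \<circ> h)"
proof -
  assume h: "emb \<sigma> A B h" and k: "emb \<sigma> B C k"
  have into: "h ` car A \<subseteq> car B" using hom_image_subset[OF emb_hom[OF h]] .
  have "inj_on (k \<circ> h) (car A)"
    using emb_inj_on[OF h] emb_inj_on[OF k] into by (meson comp_inj_on inj_on_subset)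
  moreover have "rel_of A R xs"
    if "length xs = rarity \<sigma> R" "set xs \<subseteq> car A" "rel_of C R (map (k \<circ> h) xs)" for R xs
  proof -
    have "set (map h xs) \<subseteq> car B" using that(2) into by auto
    then have "rel_of B R (map h xs)" using k that unfolding emb_def by auto
    then show ?thesis using h that unfolding emb_def by auto
  qed
  ultimately show ?thesis using hom_comp[OF emb_hom[OF h] emb_hom[OF k]] unfolding emb_def by blast
qed

lemma hom_restr: "hom \<sigma> A B h \<Longrightarrow> Y \<subseteq> car A \<Longrightarrow> hom \<sigma> (restr A Y) B h"
  unfolding hom_def by auto

lemma emb_restr: "emb \<sigma> A B h \<Longrightarrow> Y \<subseteq> car A \<Longrightarrow> emb \<sigma> (restr A Y) B h"
  unfolding emb_def using hom_restr[of \<sigma> A B h Y] by (auto intro: inj_on_subset)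

lemma hom_restr_codomain: "hom \<sigma> A B h \<Longrightarrow> h ` car A \<subseteq> Y \<Longrightarrow> hom \<sigma> A (restr B Y) h"
  unfolding hom_def by auto

lemma emb_restr_codomain: "emb \<sigma> A B h \<Longrightarrow> h ` car A \<subseteq> Y \<Longrightarrow> emb \<sigma> A (restr B Y) h"
  unfolding emb_def using hom_restr_codomain[of \<sigma> A B h Y] by auto

lemma emb_substruct: "substruct \<sigma> B A \<Longrightarrow> emb \<sigma> A C h \<Longrightarrow> emb \<sigma> B C h"
  unfolding emb_def hom_def substruct_def by (auto simp: subset_iff intro: inj_on_subset)

lemma emb_id_substruct: "substruct \<sigma> B A \<Longrightarrow> emb \<sigma> B A id"
  unfolding substruct_def emb_def hom_def by auto

lemma emb_id_restr: "Y \<subseteq> car A \<Longrightarrow> emb \<sigma> (restr A Y) A id"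
  unfolding emb_def hom_def by auto

lemma emb_restr_substruct:
  "substruct \<sigma> A U \<Longrightarrow> emb \<sigma> A B h \<Longrightarrow> emb \<sigma> (restr U (car A)) B h"
  unfolding substruct_def emb_def hom_def by (simp add: subset_iff)

lemma hom_eq_on_generated:
  assumes "hom \<sigma> A B g" "hom \<sigma> A B g'" "generated \<sigma> A X \<subseteq> car A" "\<forall>x\<in>X. g x = g' x"
  shows "\<forall>x\<in>generated \<sigma> A X. g x = g' x"
proof
  fix x assume "x \<in> generated \<sigma> A X" then show "g x = g' x"
  proof (induction rule: generated.induct)
    case (gen_fun xs f)
    then have "set xs \<subseteq> car A" using assms(3) by (auto intro: generated.intros)
    moreover have "map g xs = map g' xs" using gen_fun by auto
    ultimately show ?case using assms(1,2) gen_fun(1) unfolding hom_def by metis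
  qed (use assms in auto)
qed

lemma hom_image_generated:
  assumes "hom \<sigma> A B h" "generated \<sigma> A X \<subseteq> car A"
  shows "h ` generated \<sigma> A X = generated \<sigma> B (h ` X)"
proof
  have "h x \<in> generated \<sigma> B (h ` X)" if "x \<in> generated \<sigma> A X" for x
    using that
  proof (induction rule: generated.induct)
    case (gen_fun xs f)
    then have "set xs \<subseteq> car A" using assms(2) by (auto intro: generated.intros)
    then have "h (fun_of A f xs) = fun_of B f (map h xs)" using assms(1) gen_fun(1) unfolding hom_def by auto
    then show ?case using gen_fun by (auto intro!: generated_fun_closed)
  qed (auto intro: generated.intros)
  then show "h ` generated \<sigma> A X \<subseteq> generated \<sigma> B (h ` X)" by blast
next
  show "generated \<sigma> B (h ` X) \<subseteq> h ` generated \<sigma> A X"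
  proof
    fix y assume "y \<in> generated \<sigma> B (h ` X)" then show "y \<in> h ` generated \<sigma> A X"
    proof (induction rule: generated.induct)
      case (gen_fun xs f)
      define ys where "ys = map (inv_into (generated \<sigma> A X) h) xs"
      have ys: "set ys \<subseteq> generated \<sigma> A X" "map h ys = xs"
        using gen_fun(2) unfolding ys_def by (auto simp: inv_into_into f_inv_into_f intro!: map_idI)
      then have "h (fun_of A f ys) = fun_of B f xs"
        using assms gen_fun(1) unfolding hom_def by (metis length_map order_trans)
      moreover have "fun_of A f ys \<in> generated \<sigma> A X" using ys gen_fun(1) by (auto intro: generated_fun_closed)
      ultimately show ?case by (metis image_eqI)
    qed (auto intro: generated.intros)
  qed
qed

lemma emb_inv_into:
  assumes "emb \<sigma> A B h" "wf_struct \<sigma> A"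
  shows "emb \<sigma> (restr B (h ` car A)) A (inv_into (car A) h)"
proof -
  have hom: "hom \<sigma> A B h" and inj: "inj_on h (car A)" using assms unfolding emb_def by auto
  let ?g = "inv_into (car A) h"
  have pre: "set (map ?g xs) \<subseteq> car A" "map h (map ?g xs) = xs" if "set xs \<subseteq> h ` car A" for xs
    using that by (auto simp: inv_into_into f_inv_into_f intro!: map_idI)
  have fun_eq: "?g (fun_of B f xs) = fun_of A f (map ?g xs)"
    if "length xs = farity \<sigma> f" "set xs \<subseteq> h ` car A" for f xs
  proof -
    have "h (fun_of A f (map ?g xs)) = fun_of B f xs"
      using hom that pre[OF that(2)] unfolding hom_def by (metis length_map)
    moreover have "fun_of A f (map ?g xs) \<in> car A"
      using assms(2) that pre[OF that(2)] unfolding wf_struct_def by auto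
    ultimately show ?thesis using inj by (metis inv_into_f_f)
  qed
  have rel_iff: "rel_of A R (map ?g xs) \<longleftrightarrow> rel_of B R xs"
    if "length xs = rarity \<sigma> R" "set xs \<subseteq> h ` car A" for R xs
  proof -
    have "rel_of B R (map h (map ?g xs)) \<longleftrightarrow> rel_of A R (map ?g xs)"
      using assms(1) that(1) pre[OF that(2)] unfolding emb_def hom_def by (metis length_map)
    then show ?thesis using pre[OF that(2)] by simp
  qed
  have "hom \<sigma> (restr B (h ` car A)) A ?g"
    unfolding hom_def
  proof (intro conjI allI impI ballI)
    show "?g x \<in> car A" if "x \<in> car (restr B (h ` car A))" for x
      using that by (auto simp: inv_into_into)
    show "?g (fun_of (restr B (h ` car A)) f xs) = fun_of A f (map ?g xs)"
      if "length xs = farity \<sigma> f \<and> set xs \<subseteq> car (restr B (h ` car A))" for f xs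
      using that fun_eq by simp
    show "rel_of A R (map ?g xs)"
      if "length xs = rarity \<sigma> R \<and> set xs \<subseteq> car (restr B (h ` car A)) \<and>
          rel_of (restr B (h ` car A)) R xs" for R xs
      using that rel_iff[of xs R] by simp
  qed
  moreover have "inj_on ?g (h ` car A)" by (rule inj_on_inv_into) simp
  moreover have "rel_of (restr B (h ` car A)) R xs"
    if "length xs = rarity \<sigma> R \<and> set xs \<subseteq> car (restr B (h ` car A)) \<and> rel_of A R (map ?g xs)" for R xs
    using that rel_iff[of xs R] by simp
  ultimately show ?thesis unfolding emb_def by simp
qed

lemma emb_iso_image: "emb \<sigma> A B h \<Longrightarrow> iso \<sigma> A (restr B (h ` car A)) h"
  using emb_restr_codomain[of \<sigma> A B h] unfolding iso_def emb_def by (auto simp: inj_on_imp_bij_betw)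

lemma automorphism_inv_into:
  assumes "automorphism \<sigma> U \<beta>" "wf_struct \<sigma> U"
  shows "emb \<sigma> U U (inv_into (car U) \<beta>)" "x \<in> car U \<Longrightarrow> inv_into (car U) \<beta> (\<beta> x) = x"
proof -
  have b: "bij_betw \<beta> (car U) (car U)" using assms unfolding automorphism_def iso_def by auto
  then show "emb \<sigma> U U (inv_into (car U) \<beta>)"
    using emb_inv_into[OF automorphism_emb[OF assms(1)] assms(2)] by (simp add: bij_betw_def)
  show "x \<in> car U \<Longrightarrow> inv_into (car U) \<beta> (\<beta> x) = x" using b by (simp add: bij_betw_def)
qed

lemma countable_struct_nat_copy:
  fixes A :: "('a,'f,'r) struct"
  assumes "wf_struct \<sigma> A" "countable (car A)"
  obtains A' :: "(nat,'f,'r) struct" and \<phi> \<psi> where "wf_struct \<sigma> A'" "countable (car A')"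
    "emb \<sigma> A A' \<phi>" "emb \<sigma> A' A \<psi>" "\<forall>x\<in>car A. \<psi> (\<phi> x) = x"
proof -
  define \<phi> where "\<phi> = to_nat_on (car A)"
  define \<psi> where "\<psi> = inv_into (car A) \<phi>"
  have inj: "inj_on \<phi> (car A)" unfolding \<phi>_def using assms(2) by auto
  have \<psi>\<phi>: "\<And>x. x \<in> car A \<Longrightarrow> \<psi> (\<phi> x) = x" unfolding \<psi>_def using inj by simp
  have \<psi>_into: "\<And>xs. set xs \<subseteq> \<phi> ` car A \<Longrightarrow> set (map \<psi> xs) \<subseteq> car A"
    unfolding \<psi>_def by (auto simp: inv_into_into)
  define A' :: "(nat,'f,'r) struct" where
    "A' = \<lparr>car = \<phi> ` car A, fun_of = (\<lambda>f xs. \<phi> (fun_of A f (map \<psi> xs))),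
            rel_of = (\<lambda>R xs. rel_of A R (map \<psi> xs))\<rparr>"
  have \<phi>_emb: "emb \<sigma> A A' \<phi>"
    unfolding emb_def hom_def A'_def using inj \<psi>\<phi> by (auto simp: map_idI subset_iff)
  have "wf_struct \<sigma> A'"
    using assms(1) \<psi>_into unfolding wf_struct_def A'_def by auto
  moreover have "emb \<sigma> A' A \<psi>"
    using emb_inv_into[OF \<phi>_emb assms(1)] unfolding \<psi>_def by (simp add: A'_def)
  moreover have "countable (car A')" unfolding A'_def by simp
  ultimately show ?thesis using that \<phi>_emb \<psi>\<phi> by blast
qed

lemma emb_image_generated:
  "emb \<sigma> (restr A (generated \<sigma> A X)) B e \<Longrightarrow> e ` generated \<sigma> A X = generated \<sigma> B (e ` X)"
  using hom_image_generated[OF emb_hom, of \<sigma> "restr A (generated \<sigma> A X)" B e X] by simp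

lemma emb_comp_inv_into_generated:
  assumes "emb \<sigma> (restr U (generated \<sigma> U X)) U e" "emb \<sigma> (restr U (generated \<sigma> U X)) B e'"
  shows "emb \<sigma> (restr U (generated \<sigma> U (e ` X))) B (e' \<circ> inv_into (generated \<sigma> U X) e)"
  using emb_comp[OF emb_inv_into[OF assms(1) wf_struct_restr_generated] assms(2)]
  by (simp add: emb_image_generated[OF assms(1)])

lemma fin_gen_hom_image:
  assumes "fin_gen \<sigma> B" "hom \<sigma> B A \<phi>"
  obtains X where "finite X" "X \<subseteq> car A" "\<phi> ` car B = generated \<sigma> A X"
proof -
  obtain X where X: "finite X" "X \<subseteq> car B" "generated \<sigma> B X = car B"
    using assms(1) unfolding fin_gen_def by auto
  have "\<phi> ` car B = generated \<sigma> A (\<phi> ` X)"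
    using hom_image_generated[OF assms(2)] X(3) by (metis order_refl)
  moreover have "\<phi> ` X \<subseteq> car A" using X(2) hom_closed[OF assms(2)] by auto
  ultimately show ?thesis using that X(1) by blast
qed

lemma countable_finite_exhaustion:
  assumes "countable S"
  obtains Y where "\<And>n. finite (Y n)" "\<And>n. Y n \<subseteq> Y (Suc n)" "\<And>n. Y n \<subseteq> S" "Y 0 = {}"
    "S \<subseteq> (\<Union>n. Y n)"
proof -
  define Y where "Y n = from_nat_into S ` {..<n} \<inter> S" for n
  have "x \<in> (\<Union>n. Y n)" if x: "x \<in> S" for x
  proof -
    obtain i where "from_nat_into S i = x" using from_nat_into_surj[OF assms x] by blast
    then have "x \<in> Y (Suc i)" using x unfolding Y_def by auto
    then show ?thesis by blast
  qed
  moreover have "finite (Y n)" "Y n \<subseteq> Y (Suc n)" "Y n \<subseteq> S" for n unfolding Y_def by auto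
  moreover have "Y 0 = {}" unfolding Y_def by simp
  ultimately show ?thesis using that[of Y] by blast
qed

section \<open>Limits of chains of maps\<close>

definition limit_map :: "(nat \<Rightarrow> 'a set) \<Rightarrow> (nat \<Rightarrow> 'a \<Rightarrow> 'b) \<Rightarrow> 'a \<Rightarrow> 'b" where
  "limit_map G E x = E (LEAST n. x \<in> G n) x"

locale map_chain =
  fixes G :: "nat \<Rightarrow> 'a set" and E :: "nat \<Rightarrow> 'a \<Rightarrow> 'b"
  assumes chain_mono: "G n \<subseteq> G (Suc n)"
    and chain_agree: "x \<in> G n \<Longrightarrow> E (Suc n) x = E n x"
begin

lemma chain_mono_le: "m \<le> n \<Longrightarrow> G m \<subseteq> G n"
  by (rule lift_Suc_mono_le[of G]) (use chain_mono in auto)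

lemma chain_agree_le: "m \<le> n \<Longrightarrow> x \<in> G m \<Longrightarrow> E n x = E m x"
proof (induction n rule: dec_induct)
  case (step k)
  then show ?case using chain_agree[of x k] chain_mono_le[of m k] by auto
qed simp

lemma limit_map_eq: "x \<in> G n \<Longrightarrow> limit_map G E x = E n x"
  unfolding limit_map_def by (metis LeastI Least_le chain_agree_le)

lemma finite_subset_chain: "finite F \<Longrightarrow> F \<subseteq> (\<Union>n. G n) \<Longrightarrow> \<exists>n. F \<subseteq> G n"
proof (induction F rule: finite_induct)
  case (insert u F)
  then obtain m n where "F \<subseteq> G m" "u \<in> G n" by auto
  then have "insert u F \<subseteq> G (max m n)" using chain_mono_le[of m "max m n"] chain_mono_le[of n "max m n"] by auto
  then show ?case by blast
qed simp

lemma map_limit_map: "set xs \<subseteq> G n \<Longrightarrow> map (limit_map G E) xs = map (E n) xs"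
  using limit_map_eq by auto

context
  fixes \<sigma> :: "('f,'r) signature" and A :: "('a,'f,'r) struct"
  assumes cover: "car A \<subseteq> (\<Union>n. G n)"
    and closed: "\<And>n f xs. length xs = farity \<sigma> f \<Longrightarrow> set xs \<subseteq> G n \<Longrightarrow> fun_of A f xs \<in> G n"
begin

lemma hom_limit_map:
  assumes homs: "\<And>n. hom \<sigma> (restr A (G n)) B (E n)"
  shows "hom \<sigma> A B (limit_map G E)"
  unfolding hom_def
proof (intro conjI allI impI ballI)
  fix x assume "x \<in> car A"
  then obtain n where "x \<in> G n" using cover by blast
  then show "limit_map G E x \<in> car B" using hom_closed[OF homs[of n]] limit_map_eq by simp
next
  fix f xs assume xs: "length xs = farity \<sigma> f \<and> set xs \<subseteq> car A"
  then obtain n where n: "set xs \<subseteq> G n" using finite_subset_chain[of "set xs"] cover by auto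
  have "E n (fun_of A f xs) = fun_of B f (map (E n) xs)"
    using homs[of n] xs n unfolding hom_def by simp
  moreover have "fun_of A f xs \<in> G n" using closed xs n by blast
  ultimately show "limit_map G E (fun_of A f xs) = fun_of B f (map (limit_map G E) xs)"
    unfolding map_limit_map[OF n] using limit_map_eq by simp
next
  fix R xs assume xs: "length xs = rarity \<sigma> R \<and> set xs \<subseteq> car A \<and> rel_of A R xs"
  then obtain n where n: "set xs \<subseteq> G n" using finite_subset_chain[of "set xs"] cover by auto
  then show "rel_of B R (map (limit_map G E) xs)"
    unfolding map_limit_map[OF n] using homs[of n] xs unfolding hom_def by simp
qed

lemma emb_limit_map:
  assumes embs: "\<And>n. emb \<sigma> (restr A (G n)) B (E n)"
  shows "emb \<sigma> A B (limit_map G E)"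
proof -
  have "inj_on (limit_map G E) (car A)"
  proof (rule inj_onI)
    fix x y assume "x \<in> car A" "y \<in> car A" "limit_map G E x = limit_map G E y"
    moreover obtain n where "{x, y} \<subseteq> G n" using finite_subset_chain[of "{x, y}"] cover calculation by auto
    ultimately show "x = y"
      using emb_inj_on[OF embs[of n]] limit_map_eq[of x n] limit_map_eq[of y n] by (simp add: inj_on_def)
  qed
  moreover have "rel_of A R xs"
    if xs: "length xs = rarity \<sigma> R" "set xs \<subseteq> car A" "rel_of B R (map (limit_map G E) xs)" for R xs
  proof -
    obtain n where n: "set xs \<subseteq> G n" using finite_subset_chain[of "set xs"] cover xs(2) by auto
    then show ?thesis using embs[of n] xs unfolding map_limit_map[OF n] emb_def by simp
  qed
  ultimately show ?thesis using hom_limit_map[OF emb_hom[OF embs]] unfolding emb_def by blast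
qed

end

end

lemma automorphism_limit_map:
  fixes E :: "nat \<Rightarrow> 'a \<Rightarrow> 'a"
  assumes "map_chain G E" and cover: "car A \<subseteq> (\<Union>n. G n)"
    and closed: "\<And>n f xs. length xs = farity \<sigma> f \<Longrightarrow> set xs \<subseteq> G n \<Longrightarrow> fun_of A f xs \<in> G n"
    and embs: "\<And>n. emb \<sigma> (restr A (G n)) A (E n)" and G_car: "\<And>n. G n \<subseteq> car A"
    and onto: "car A \<subseteq> (\<Union>n. E n ` G n)"
  shows "automorphism \<sigma> A (limit_map G E)"
proof -
  interpret map_chain G E by fact
  have emb: "emb \<sigma> A A (limit_map G E)" by (rule emb_limit_map[OF cover closed embs])
  have "car A \<subseteq> limit_map G E ` car A"
  proof
    fix v assume "v \<in> car A"
    then obtain n y where "y \<in> G n" "v = E n y" using onto by blast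
    then show "v \<in> limit_map G E ` car A" using G_car limit_map_eq by (metis image_eqI subsetD)
  qed
  then have "bij_betw (limit_map G E) (car A) (car A)"
    using emb_inj_on[OF emb] hom_image_subset[OF emb_hom[OF emb]] unfolding bij_betw_def by blast
  then show ?thesis using emb unfolding automorphism_def iso_def by blast
qed

definition embeds_locally :: "('f,'r) signature \<Rightarrow> ('a,'f,'r) struct \<Rightarrow> ('u,'f,'r) struct \<Rightarrow> bool" where
  "embeds_locally \<sigma> A U \<longleftrightarrow> (\<forall>B. substruct \<sigma> B A \<and> fin_gen \<sigma> B \<longrightarrow> (\<exists>\<phi>. emb \<sigma> B U \<phi>))"

lemma embeds_locally_restr: "Y \<subseteq> car U \<Longrightarrow> embeds_locally \<sigma> (restr U Y) U"
  unfolding embeds_locally_def using emb_id_substruct emb_id_restr emb_comp by metis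

lemma embeds_locally_emb:
  assumes "emb \<sigma> A' A \<psi>" "wf_struct \<sigma> A" "embeds_locally \<sigma> A U"
  shows "embeds_locally \<sigma> A' U"
  unfolding embeds_locally_def
proof (intro allI impI)
  fix B' assume B': "substruct \<sigma> B' A' \<and> fin_gen \<sigma> B'"
  have e: "emb \<sigma> B' A \<psi>" using emb_substruct B' assms(1) by blast
  obtain X where X: "finite X" "X \<subseteq> car A" "\<psi> ` car B' = generated \<sigma> A X"
    using fin_gen_hom_image[OF conjunct2[OF B'] emb_hom[OF e]] .
  obtain \<phi> where \<phi>: "emb \<sigma> (restr A (generated \<sigma> A X)) U \<phi>"
    using assms(3) substruct_restr_generated[OF assms(2) X(2)] fin_gen_restr_generated[OF X(1)]
    unfolding embeds_locally_def by blast
  have "emb \<sigma> B' (restr A (generated \<sigma> A X)) \<psi>" using emb_restr_codomain[OF e] X(3) by simp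
  then show "\<exists>\<phi>. emb \<sigma> B' U \<phi>" using emb_comp \<phi> by blast
qed

lemma in_cbar_embeds_locally:
  assumes "in_cbar \<sigma> K A" "\<forall>D\<in>K. \<exists>B. substruct \<sigma> B U \<and> isomorphic \<sigma> D B"
  shows "embeds_locally \<sigma> A U"
  unfolding embeds_locally_def
proof (intro allI impI)
  fix B assume "substruct \<sigma> B A \<and> fin_gen \<sigma> B"
  then obtain D k where D: "D \<in> K" "iso \<sigma> B D k"
    using assms(1) unfolding in_cbar_def isomorphic_def by blast
  then obtain B' k' where B': "substruct \<sigma> B' U" "iso \<sigma> D B' k'"
    using assms(2) unfolding isomorphic_def by blast
  have "emb \<sigma> B U (id \<circ> (k' \<circ> k))"
    using emb_comp[OF emb_comp[OF iso_emb[OF D(2)] iso_emb[OF B'(2)]] emb_id_substruct[OF B'(1)]] .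
  then show "\<exists>\<phi>. emb \<sigma> B U \<phi>" by blast
qed

lemma Age_if_emb:
  fixes B :: "(nat,'f,'r) struct"
  assumes "wf_struct \<sigma> U" "wf_struct \<sigma> B" "fin_gen \<sigma> B" "emb \<sigma> B U \<phi>"
  shows "B \<in> Age \<sigma> U"
proof -
  obtain X where X: "finite X" "X \<subseteq> car U" "\<phi> ` car B = generated \<sigma> U X"
    using fin_gen_hom_image[OF assms(3) emb_hom[OF assms(4)]] .
  have "isomorphic \<sigma> B (restr U (generated \<sigma> U X))"
    using emb_iso_image[OF assms(4)] X(3) unfolding isomorphic_def by metis
  then show ?thesis
    using assms(2,3) substruct_restr_generated[OF assms(1) X(2)] fin_gen_restr_generated[OF X(1)]
    unfolding Age_def by blast
qed

lemma in_cbar_Age_if_embeds_locally: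
  fixes A :: "(nat,'f,'r) struct"
  assumes "wf_struct \<sigma> U" "wf_struct \<sigma> A" "countable (car A)" "embeds_locally \<sigma> A U"
  shows "in_cbar \<sigma> (Age \<sigma> U) A"
  unfolding in_cbar_def
proof (intro conjI assms(2,3) allI impI)
  fix B assume B: "substruct \<sigma> B A \<and> fin_gen \<sigma> B"
  then obtain \<phi> where "emb \<sigma> B U \<phi>" using assms(4) unfolding embeds_locally_def by blast
  then have "B \<in> Age \<sigma> U" using Age_if_emb[OF assms(1)] B unfolding substruct_def by blast
  then show "\<exists>D\<in>Age \<sigma> U. isomorphic \<sigma> B D" using iso_id unfolding isomorphic_def by blast
qed

text \<open>The universality clause of \<open>uh_retraction\<close> only speaks about structures on \<open>nat\<close>;
  a copy on \<open>nat\<close> transfers it to every countable structure.\<close>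

lemma uh_retraction_lift:
  fixes A :: "('a,'f,'r) struct"
  assumes r: "uh_retraction \<sigma> U V r" and "wf_struct \<sigma> U"
    and A: "wf_struct \<sigma> A" "countable (car A)" "embeds_locally \<sigma> A U" and h: "hom \<sigma> A V h"
  obtains \<iota> where "emb \<sigma> A U \<iota>" "\<forall>x\<in>car A. r (\<iota> x) = h x"
proof -
  obtain A' :: "(nat,'f,'r) struct" and \<phi> \<psi> where
    A': "wf_struct \<sigma> A'" "countable (car A')" "emb \<sigma> A A' \<phi>" "emb \<sigma> A' A \<psi>" "\<forall>x\<in>car A. \<psi> (\<phi> x) = x"
    using countable_struct_nat_copy[OF A(1,2)] .
  have "in_cbar \<sigma> (Age \<sigma> U) A'"
    using in_cbar_Age_if_embeds_locally[OF assms(2) A'(1,2) embeds_locally_emb[OF A'(4) A(1,3)]] .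
  moreover have "hom \<sigma> A' V (h \<circ> \<psi>)" using hom_comp[OF emb_hom[OF A'(4)] h] .
  ultimately obtain \<iota> where \<iota>: "emb \<sigma> A' U \<iota>" "\<forall>x\<in>car A'. (h \<circ> \<psi>) x = r (\<iota> x)"
    using r unfolding uh_retraction_def by blast
  have "\<forall>x\<in>car A. r ((\<iota> \<circ> \<phi>) x) = h x"
    using \<iota>(2) A'(5) hom_closed[OF emb_hom[OF A'(3)]] by (metis comp_apply)
  then show ?thesis using that emb_comp[OF A'(3) \<iota>(1)] by blast
qed

lemma homogeneous_aut_between:
  assumes "homogeneous \<sigma> U" "wf_struct \<sigma> U" "finite X" "X \<subseteq> car U"
    and e: "emb \<sigma> (restr U (generated \<sigma> U X)) U e" and e': "emb \<sigma> (restr U (generated \<sigma> U X)) U e'"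
  obtains \<beta> where "automorphism \<sigma> U \<beta>" "\<forall>x\<in>generated \<sigma> U X. \<beta> (e x) = e' x"
proof -
  let ?G = "generated \<sigma> U X" and ?k = "e' \<circ> inv_into (generated \<sigma> U X) e"
  have img: "e ` ?G = generated \<sigma> U (e ` X)" "e' ` ?G = generated \<sigma> U (e' ` X)"
    using emb_image_generated e e' by blast+
  have fin: "finite (e ` X)" "finite (e' ` X)" using assms(3) by simp_all
  have sub: "e ` X \<subseteq> car U" "e' ` X \<subseteq> car U"
    using subset_generated[of X \<sigma> U] hom_closed[OF emb_hom[OF e]] hom_closed[OF emb_hom[OF e']] by auto
  have "bij_betw ?k (e ` ?G) (e' ` ?G)"
    using emb_inj_on[OF e] emb_inj_on[OF e']
    by (auto intro!: bij_betw_trans[OF bij_betw_inv_into] simp: inj_on_imp_bij_betw)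
  then have bij: "bij_betw ?k (generated \<sigma> U (e ` X)) (generated \<sigma> U (e' ` X))"
    unfolding img .
  then have "emb \<sigma> (restr U (generated \<sigma> U (e ` X))) (restr U (generated \<sigma> U (e' ` X))) ?k"
    using emb_restr_codomain[OF emb_comp_inv_into_generated[OF e e']] by (simp add: bij_betw_def)
  then have iso_k: "iso \<sigma> (restr U (generated \<sigma> U (e ` X))) (restr U (generated \<sigma> U (e' ` X))) ?k"
    using bij unfolding iso_def by simp
  have "\<exists>\<alpha>. automorphism \<sigma> U \<alpha> \<and> (\<forall>x\<in>car A. \<alpha> x = f x)"
    if "substruct \<sigma> A U" "fin_gen \<sigma> A" "substruct \<sigma> B U" "fin_gen \<sigma> B" "iso \<sigma> A B f" for A B f
    using assms(1) that unfolding homogeneous_def by blast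
  from this[OF substruct_restr_generated[OF assms(2) sub(1)] fin_gen_restr_generated[OF fin(1)]
      substruct_restr_generated[OF assms(2) sub(2)] fin_gen_restr_generated[OF fin(2)] iso_k]
  obtain \<beta> where \<beta>: "automorphism \<sigma> U \<beta>" "\<forall>y\<in>generated \<sigma> U (e ` X). \<beta> y = ?k y"
    by auto
  have "\<beta> (e x) = e' x" if "x \<in> ?G" for x
  proof -
    have "e x \<in> generated \<sigma> U (e ` X)" using img(1) that by blast
    then show ?thesis using \<beta>(2) that emb_inj_on[OF e] by simp
  qed
  with \<beta>(1) show ?thesis using that by blast
qed

lemma uh_retraction_aut_between:
  assumes r: "uh_retraction \<sigma> U V r" and "wf_struct \<sigma> U" "finite X" "X \<subseteq> car U"
    and e: "emb \<sigma> (restr U (generated \<sigma> U X)) U e" and e': "emb \<sigma> (restr U (generated \<sigma> U X)) U e'"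
    and re: "\<forall>x\<in>generated \<sigma> U X. r (e x) = r (e' x)"
  obtains \<alpha> where "automorphism \<sigma> U \<alpha>" "\<forall>x\<in>car U. r (\<alpha> x) = r x"
    "\<forall>x\<in>generated \<sigma> U X. \<alpha> (e x) = e' x"
proof -
  let ?G = "generated \<sigma> U X" and ?k = "e' \<circ> inv_into (generated \<sigma> U X) e"
  have img: "e ` ?G = generated \<sigma> U (e ` X)" using emb_image_generated e by blast
  have fin: "finite (e ` X)" using assms(3) by simp
  have sub: "e ` X \<subseteq> car U"
    using subset_generated[of X \<sigma> U] hom_closed[OF emb_hom[OF e]] by auto
  have k: "?k (e x) = e' x" if "x \<in> ?G" for x using emb_inj_on[OF e] that by simp
  have rk: "\<forall>y\<in>car (restr U (generated \<sigma> U (e ` X))). r (?k y) = r y"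
  proof
    fix y assume "y \<in> car (restr U (generated \<sigma> U (e ` X)))"
    then have "y \<in> e ` ?G" using img by simp
    then show "r (?k y) = r y" using k re by auto
  qed
  have "\<exists>\<alpha>. automorphism \<sigma> U \<alpha> \<and> (\<forall>x\<in>car U. r (\<alpha> x) = r x) \<and> (\<forall>x\<in>car A. \<alpha> x = \<iota> x)"
    if "substruct \<sigma> A U" "fin_gen \<sigma> A" "emb \<sigma> A U \<iota>" "\<forall>x\<in>car A. r (\<iota> x) = r x" for A \<iota>
    using r that unfolding uh_retraction_def by blast
  from this[OF substruct_restr_generated[OF assms(2) sub] fin_gen_restr_generated[OF fin]
      emb_comp_inv_into_generated[OF e e'] rk]
  obtain \<alpha> where \<alpha>: "automorphism \<sigma> U \<alpha>" "\<forall>x\<in>car U. r (\<alpha> x) = r x"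
      "\<forall>y\<in>generated \<sigma> U (e ` X). \<alpha> y = ?k y"
    by auto
  have "\<alpha> (e x) = e' x" if "x \<in> ?G" for x
  proof -
    have "e x \<in> generated \<sigma> U (e ` X)" using img that by blast
    then show ?thesis using \<alpha>(3) k[OF that] by simp
  qed
  with \<alpha>(1,2) show ?thesis using that by blast
qed

section \<open>The extension property\<close>

definition has_extension_property ::
  "('f,'r) signature \<Rightarrow> ('u,'f,'r) struct \<Rightarrow> ('w,'f,'r) struct \<Rightarrow> ('u \<Rightarrow> 'w) \<Rightarrow> bool" where
  "has_extension_property \<sigma> U W p \<longleftrightarrow>
     (\<forall>X0 X1 e h. finite X1 \<and> X0 \<subseteq> X1 \<and> X1 \<subseteq> car U \<and>
        emb \<sigma> (restr U (generated \<sigma> U X0)) U e \<and> hom \<sigma> (restr U (generated \<sigma> U X1)) W h \<and>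
        (\<forall>x\<in>generated \<sigma> U X0. p (e x) = h x) \<longrightarrow>
        (\<exists>f. emb \<sigma> (restr U (generated \<sigma> U X1)) U f \<and> (\<forall>x\<in>generated \<sigma> U X0. f x = e x) \<and>
             (\<forall>x\<in>generated \<sigma> U X1. p (f x) = h x)))"

locale extension_property =
  fixes \<sigma> :: "('f,'r) signature" and U :: "('u,'f,'r) struct" and W :: "('w,'f,'r) struct"
    and p :: "'u \<Rightarrow> 'w"
  assumes wf_U: "wf_struct \<sigma> U" and countable_U: "countable (car U)"
    and p_hom: "hom \<sigma> U W p" and p_ext: "has_extension_property \<sigma> U W p"
begin

lemma extend_emb:
  assumes "finite X1" "X0 \<subseteq> X1" "X1 \<subseteq> car U"
    and "emb \<sigma> (restr U (generated \<sigma> U X0)) U e" "hom \<sigma> (restr U (generated \<sigma> U X1)) W h"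
    and "\<forall>x\<in>generated \<sigma> U X0. p (e x) = h x"
  obtains f where "emb \<sigma> (restr U (generated \<sigma> U X1)) U f" "\<forall>x\<in>generated \<sigma> U X0. f x = e x"
    "\<forall>x\<in>generated \<sigma> U X1. p (f x) = h x"
proof -
  have "\<exists>f. emb \<sigma> (restr U (generated \<sigma> U X1)) U f \<and> (\<forall>x\<in>generated \<sigma> U X0. f x = e x) \<and>
      (\<forall>x\<in>generated \<sigma> U X1. p (f x) = h x)"
    using p_ext[unfolded has_extension_property_def, rule_format, of X1 X0 e h] assms by blast
  then show ?thesis using that by blast
qed

lemma extend_emb_along:
  fixes B :: "('b,'f,'r) struct"
  assumes X: "finite X1" "X0 \<subseteq> X1" "X1 \<subseteq> car B"
    and \<phi>: "emb \<sigma> (restr B (generated \<sigma> B X1)) U \<phi>"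
    and e: "emb \<sigma> (restr B (generated \<sigma> B X0)) U e"
    and h: "hom \<sigma> (restr B (generated \<sigma> B X1)) W h"
    and eh: "\<forall>x\<in>generated \<sigma> B X0. p (e x) = h x"
  obtains f where "emb \<sigma> (restr B (generated \<sigma> B X1)) U f" "\<forall>x\<in>generated \<sigma> B X0. f x = e x"
    "\<forall>x\<in>generated \<sigma> B X1. p (f x) = h x"
proof -
  let ?G0 = "generated \<sigma> B X0" and ?G1 = "generated \<sigma> B X1"
  define \<psi> where "\<psi> = inv_into ?G1 \<phi>"
  have G01: "?G0 \<subseteq> ?G1" using generated_mono[OF X(2)] .
  have inj: "inj_on \<phi> ?G1" using emb_inj_on[OF \<phi>] by simp
  have \<psi>\<phi>: "\<psi> (\<phi> x) = x" if "x \<in> ?G1" for x unfolding \<psi>_def using inj that by simp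
  have img1: "generated \<sigma> U (\<phi> ` X1) = \<phi> ` ?G1" using emb_image_generated[OF \<phi>] by (rule sym)
  have "emb \<sigma> (restr B ?G0) U \<phi>" using emb_restr[OF \<phi>, of ?G0] G01 by simp
  then have img0: "generated \<sigma> U (\<phi> ` X0) = \<phi> ` ?G0" by (rule emb_image_generated[symmetric])
  have \<psi>_emb: "emb \<sigma> (restr U (generated \<sigma> U (\<phi> ` X1))) (restr B ?G1) \<psi>"
    using emb_inv_into[OF \<phi> wf_struct_restr_generated] img1 unfolding \<psi>_def by simp
  have "\<psi> ` generated \<sigma> U (\<phi> ` X0) \<subseteq> ?G0" using img0 \<psi>\<phi> G01 by auto
  then have "emb \<sigma> (restr U (generated \<sigma> U (\<phi> ` X0))) (restr B ?G0) \<psi>"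
    using emb_restr_codomain[OF emb_restr[OF \<psi>_emb]] img0 img1 G01 by (simp add: image_mono)
  then have e': "emb \<sigma> (restr U (generated \<sigma> U (\<phi> ` X0))) U (e \<circ> \<psi>)" using emb_comp e by blast
  have h': "hom \<sigma> (restr U (generated \<sigma> U (\<phi> ` X1))) W (h \<circ> \<psi>)"
    using hom_comp[OF emb_hom[OF \<psi>_emb] h] .
  have "\<forall>y\<in>generated \<sigma> U (\<phi> ` X0). p ((e \<circ> \<psi>) y) = (h \<circ> \<psi>) y"
    using eh \<psi>\<phi> img0 G01 by auto
  moreover have "\<phi> ` X1 \<subseteq> car U"
    using subset_generated[of X1 \<sigma> B] hom_closed[OF emb_hom[OF \<phi>]] by auto
  ultimately obtain f where f: "emb \<sigma> (restr U (generated \<sigma> U (\<phi> ` X1))) U f"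
    "\<forall>y\<in>generated \<sigma> U (\<phi> ` X0). f y = (e \<circ> \<psi>) y" "\<forall>y\<in>generated \<sigma> U (\<phi> ` X1). p (f y) = (h \<circ> \<psi>) y"
    using extend_emb[OF _ image_mono[OF X(2)] _ e' h'] X(1) by blast
  have "emb \<sigma> (restr B ?G1) U (f \<circ> \<phi>)"
    using emb_comp[OF emb_restr_codomain[OF \<phi>] f(1)] img1 by simp
  moreover have "\<forall>x\<in>?G0. (f \<circ> \<phi>) x = e x" using f(2) img0 \<psi>\<phi> G01 by auto
  moreover have "\<forall>x\<in>?G1. p ((f \<circ> \<phi>) x) = h x" using f(3) img1 \<psi>\<phi> by auto
  ultimately show ?thesis using that by blast
qed

lemma lift:
  fixes A :: "('a,'f,'r) struct"
  assumes A: "wf_struct \<sigma> A" "countable (car A)" "embeds_locally \<sigma> A U" and h: "hom \<sigma> A W h"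
  obtains \<iota> where "emb \<sigma> A U \<iota>" "\<forall>x\<in>car A. p (\<iota> x) = h x"
proof -
  obtain Y where Y: "\<And>n. finite (Y n)" "\<And>n. Y n \<subseteq> Y (Suc n)" "\<And>n. Y n \<subseteq> car A" "Y 0 = {}"
      "car A \<subseteq> (\<Union>n. Y n)"
    by (rule countable_finite_exhaustion[OF A(2)]) (rule that)
  define G where "G n = generated \<sigma> A (Y n)" for n
  have G_emb: "\<exists>\<phi>. emb \<sigma> (restr A (G n)) U \<phi>" for n
    using A(3) substruct_restr_generated[OF A(1) Y(3)] fin_gen_restr_generated[OF Y(1)]
    unfolding embeds_locally_def G_def by blast
  have hG: "hom \<sigma> (restr A (G n)) W h" for n
    using hom_restr[OF h generated_subset_car[OF A(1) Y(3)]] unfolding G_def .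
  define P where "P n e \<longleftrightarrow> emb \<sigma> (restr A (G n)) U e \<and> (\<forall>x\<in>G n. p (e x) = h x)" for n e
  have "\<exists>E. \<forall>n. P n (E n) \<and> (\<forall>x\<in>G n. E (Suc n) x = E n x)"
  proof (rule dependent_nat_choice)
    obtain \<phi> where \<phi>: "emb \<sigma> (restr A (G 0)) U \<phi>" using G_emb by blast
    have "\<forall>x\<in>generated \<sigma> (restr A (G 0)) (Y 0). (p \<circ> \<phi>) x = h x"
      by (rule hom_eq_on_generated[OF hom_comp[OF emb_hom[OF \<phi>] p_hom] hG]) (simp_all add: G_def Y(4))
    then show "\<exists>e. P 0 e" using \<phi> unfolding P_def G_def by auto
  next
    fix e n assume "P n e"
    moreover obtain \<phi> where "emb \<sigma> (restr A (G (Suc n))) U \<phi>" using G_emb by blast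
    ultimately obtain f where "emb \<sigma> (restr A (G (Suc n))) U f" "\<forall>x\<in>G n. f x = e x"
        "\<forall>x\<in>G (Suc n). p (f x) = h x"
      using extend_emb_along[OF Y(1) Y(2) Y(3)] hG unfolding P_def G_def by metis
    then show "\<exists>f. P (Suc n) f \<and> (\<forall>x\<in>G n. f x = e x)" unfolding P_def by blast
  qed
  then obtain E where E: "\<And>n. P n (E n)" "\<And>n x. x \<in> G n \<Longrightarrow> E (Suc n) x = E n x" by blast
  interpret map_chain G E
    using E(2) generated_mono[OF Y(2), of \<sigma> A] unfolding G_def by unfold_locales auto
  have cover: "car A \<subseteq> (\<Union>n. G n)" using Y(5) subset_generated[of "Y _" \<sigma> A] unfolding G_def by blast
  have "emb \<sigma> A U (limit_map G E)"
  proof (rule emb_limit_map[OF cover])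
    show "fun_of A f xs \<in> G n" if "length xs = farity \<sigma> f" "set xs \<subseteq> G n" for n f xs
      using that unfolding G_def by (rule generated_fun_closed)
    show "emb \<sigma> (restr A (G n)) U (E n)" for n using E(1) unfolding P_def by blast
  qed
  moreover have "p (limit_map G E x) = h x" if x: "x \<in> car A" for x
  proof -
    obtain n where "x \<in> G n" using cover x by blast
    then show ?thesis using limit_map_eq E(1) unfolding P_def by simp
  qed
  ultimately show ?thesis using that by blast
qed

definition partial_aut :: "'u set \<Rightarrow> ('u \<Rightarrow> 'u) \<Rightarrow> bool" where
  "partial_aut X \<phi> \<longleftrightarrow> finite X \<and> X \<subseteq> car U \<and> emb \<sigma> (restr U (generated \<sigma> U X)) U \<phi> \<and>
     (\<forall>x\<in>generated \<sigma> U X. p (\<phi> x) = p x)"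

lemma partial_aut_extend:
  assumes "partial_aut X \<phi>" "u \<in> car U"
  obtains \<phi>' where "partial_aut (insert u X) \<phi>'" "\<forall>x\<in>generated \<sigma> U X. \<phi>' x = \<phi> x"
proof -
  have X: "finite (insert u X)" "X \<subseteq> insert u X" "insert u X \<subseteq> car U"
    using assms unfolding partial_aut_def by auto
  have "hom \<sigma> (restr U (generated \<sigma> U (insert u X))) W p"
    using hom_restr[OF p_hom generated_subset_car[OF wf_U X(3)]] .
  then obtain \<phi>' where "emb \<sigma> (restr U (generated \<sigma> U (insert u X))) U \<phi>'"
      "\<forall>x\<in>generated \<sigma> U X. \<phi>' x = \<phi> x" "\<forall>x\<in>generated \<sigma> U (insert u X). p (\<phi>' x) = p x"
    using extend_emb[OF X] assms(1) unfolding partial_aut_def by blast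
  then show ?thesis using that X unfolding partial_aut_def by blast
qed

lemma partial_aut_inverse:
  assumes "partial_aut X \<phi>"
  shows "partial_aut (\<phi> ` X) (inv_into (generated \<sigma> U X) \<phi>)"
    and "generated \<sigma> U (\<phi> ` X) = \<phi> ` generated \<sigma> U X"
proof -
  have X: "finite X" "X \<subseteq> car U" and \<phi>: "emb \<sigma> (restr U (generated \<sigma> U X)) U \<phi>"
    and p\<phi>: "\<forall>x\<in>generated \<sigma> U X. p (\<phi> x) = p x"
    using assms unfolding partial_aut_def by auto
  show img: "generated \<sigma> U (\<phi> ` X) = \<phi> ` generated \<sigma> U X"
    using emb_image_generated[OF \<phi>] by (rule sym)
  have "emb \<sigma> (restr U (generated \<sigma> U (\<phi> ` X))) U (id \<circ> inv_into (generated \<sigma> U X) \<phi>)"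
    using emb_comp_inv_into_generated[OF \<phi> emb_id_restr[OF generated_subset_car[OF wf_U X(2)]]] .
  moreover have "\<phi> ` X \<subseteq> car U"
    using subset_generated[of X \<sigma> U] hom_closed[OF emb_hom[OF \<phi>]] by auto
  moreover have "\<forall>y\<in>generated \<sigma> U (\<phi> ` X). p (inv_into (generated \<sigma> U X) \<phi> y) = p y"
    using p\<phi> emb_inj_on[OF \<phi>] unfolding img by auto
  ultimately show "partial_aut (\<phi> ` X) (inv_into (generated \<sigma> U X) \<phi>)"
    using X(1) unfolding partial_aut_def by simp
qed

text \<open>Go forth to bring \<open>u\<close> into the domain, invert, go forth again to bring \<open>u\<close> into the
  domain of the inverse, and invert back.\<close>

lemma partial_aut_back_and_forth:
  assumes "partial_aut X \<phi>" "u \<in> car U"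
  obtains X' \<phi>' where "partial_aut X' \<phi>'" "generated \<sigma> U X \<subseteq> generated \<sigma> U X'"
    "\<forall>x\<in>generated \<sigma> U X. \<phi>' x = \<phi> x" "u \<in> generated \<sigma> U X'" "u \<in> \<phi>' ` generated \<sigma> U X'"
proof -
  obtain f1 where f1: "partial_aut (insert u X) f1" "\<forall>x\<in>generated \<sigma> U X. f1 x = \<phi> x"
    using partial_aut_extend[OF assms] .
  define G1 Y q where "G1 = generated \<sigma> U (insert u X)" and "Y = f1 ` insert u X"
    and "q = inv_into G1 f1"
  have Y: "partial_aut Y q" "generated \<sigma> U Y = f1 ` G1"
    using partial_aut_inverse[OF f1(1)] unfolding G1_def Y_def q_def by auto
  obtain f2 where f2: "partial_aut (insert u Y) f2" "\<forall>y\<in>generated \<sigma> U Y. f2 y = q y"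
    using partial_aut_extend[OF Y(1) assms(2)] .
  define G2 X' \<phi>' where "G2 = generated \<sigma> U (insert u Y)" and "X' = f2 ` insert u Y"
    and "\<phi>' = inv_into G2 f2"
  have X': "partial_aut X' \<phi>'" "generated \<sigma> U X' = f2 ` G2"
    using partial_aut_inverse[OF f2(1)] unfolding G2_def X'_def \<phi>'_def by auto
  have inj1: "inj_on f1 G1"
    using emb_inj_on[of \<sigma> "restr U G1" U f1] f1(1) unfolding partial_aut_def G1_def by simp
  have inj2: "inj_on f2 G2"
    using emb_inj_on[of \<sigma> "restr U G2" U f2] f2(1) unfolding partial_aut_def G2_def by simp
  have YG2: "generated \<sigma> U Y \<subseteq> G2" unfolding G2_def by (rule generated_mono) blast
  have inner: "x \<in> generated \<sigma> U X' \<and> \<phi>' x = f1 x" if "x \<in> G1" for x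
  proof -
    have y: "f1 x \<in> generated \<sigma> U Y" using Y(2) that by blast
    then have "f2 (f1 x) = x" using f2(2) inj1 that unfolding q_def by simp
    moreover have "f1 x \<in> G2" using y YG2 by blast
    ultimately show ?thesis using X'(2) inj2 unfolding \<phi>'_def by (metis image_eqI inv_into_f_f)
  qed
  have XG1: "generated \<sigma> U X \<subseteq> G1" unfolding G1_def by (rule generated_mono) blast
  have uG1: "u \<in> G1" and uG2: "u \<in> G2" unfolding G1_def G2_def by (auto intro: generated.gen_base)
  have "u \<in> \<phi>' ` generated \<sigma> U X'"
    using X'(2) uG2 inj2 unfolding \<phi>'_def by (metis image_eqI inv_into_f_f)
  moreover have "generated \<sigma> U X \<subseteq> generated \<sigma> U X'" using inner XG1 by blast
  moreover have "\<forall>x\<in>generated \<sigma> U X. \<phi>' x = \<phi> x" using inner XG1 f1(2) by auto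
  moreover have "u \<in> generated \<sigma> U X'" using inner uG1 by blast
  ultimately show ?thesis using that X'(1) by blast
qed

lemma partial_aut_chain:
  assumes "partial_aut X0 \<phi>0"
  obtains X \<phi> where "X 0 = X0" "\<phi> 0 = \<phi>0" "\<And>n. partial_aut (X n) (\<phi> n)"
    "map_chain (\<lambda>n. generated \<sigma> U (X n)) \<phi>"
    "car U \<subseteq> (\<Union>n. generated \<sigma> U (X n))" "car U \<subseteq> (\<Union>n. \<phi> n ` generated \<sigma> U (X n))"
proof -
  define u where "u n = from_nat_into (car U) n" for n
  define P where "P n st \<longleftrightarrow> partial_aut (fst st) (snd st) \<and> (n = 0 \<longrightarrow> st = (X0, \<phi>0))"
    for n :: nat and st
  define Q where "Q n st st' \<longleftrightarrow>
      generated \<sigma> U (fst st) \<subseteq> generated \<sigma> U (fst st') \<and>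
      (\<forall>x\<in>generated \<sigma> U (fst st). snd st' x = snd st x) \<and>
      (u n \<in> car U \<longrightarrow> u n \<in> generated \<sigma> U (fst st') \<and> u n \<in> snd st' ` generated \<sigma> U (fst st'))"
    for n st st'
  have "\<exists>st. \<forall>n. P n (st n) \<and> Q n (st n) (st (Suc n))"
  proof (rule dependent_nat_choice)
    show "\<exists>st. P 0 st" using assms unfolding P_def by auto
  next
    fix st n assume st: "P n st"
    show "\<exists>st'. P (Suc n) st' \<and> Q n st st'"
    proof (cases "u n \<in> car U")
      case True
      then obtain X' \<phi>' where "partial_aut X' \<phi>'" "generated \<sigma> U (fst st) \<subseteq> generated \<sigma> U X'"
          "\<forall>x\<in>generated \<sigma> U (fst st). \<phi>' x = snd st x"
          "u n \<in> generated \<sigma> U X'" "u n \<in> \<phi>' ` generated \<sigma> U X'"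
        using partial_aut_back_and_forth st unfolding P_def by blast
      then show ?thesis unfolding P_def Q_def by (intro exI[of _ "(X', \<phi>')"]) auto
    next
      case False
      then show ?thesis using st unfolding P_def Q_def by (intro exI[of _ st]) auto
    qed
  qed
  then obtain st where st: "\<And>n. P n (st n)" "\<And>n. Q n (st n) (st (Suc n))" by blast
  have "\<exists>n. x \<in> generated \<sigma> U (fst (st n)) \<and> x \<in> snd (st n) ` generated \<sigma> U (fst (st n))"
    if x: "x \<in> car U" for x
  proof -
    obtain i where "u i = x" using from_nat_into_surj[OF countable_U x] unfolding u_def by blast
    then show ?thesis using st(2)[of i] x unfolding Q_def by blast
  qed
  then have "car U \<subseteq> (\<Union>n. generated \<sigma> U (fst (st n)))"
    and "car U \<subseteq> (\<Union>n. snd (st n) ` generated \<sigma> U (fst (st n)))" by blast+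
  moreover have "map_chain (\<lambda>n. generated \<sigma> U (fst (st n))) (\<lambda>n. snd (st n))"
    using st(2) unfolding Q_def by unfold_locales auto
  moreover have "fst (st 0) = X0" "snd (st 0) = \<phi>0" using st(1)[of 0] unfolding P_def by auto
  moreover have "partial_aut (fst (st n)) (snd (st n))" for n using st(1) unfolding P_def by blast
  ultimately show ?thesis by (intro that[of "\<lambda>n. fst (st n)" "\<lambda>n. snd (st n)"])
qed

lemma extend_to_aut:
  assumes A: "substruct \<sigma> A U" "fin_gen \<sigma> A" and \<iota>: "emb \<sigma> A U \<iota>" "\<forall>x\<in>car A. p (\<iota> x) = p x"
  obtains \<alpha> where "automorphism \<sigma> U \<alpha>" "\<forall>x\<in>car U. p (\<alpha> x) = p x" "\<forall>x\<in>car A. \<alpha> x = \<iota> x"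
proof -
  obtain X0 where X0: "finite X0" "X0 \<subseteq> car A" "generated \<sigma> A X0 = car A"
    using A(2) unfolding fin_gen_def by blast
  have gen_A: "generated \<sigma> U X0 = car A" by (rule substruct_generated[OF A(1) X0(3)])
  have "car A \<subseteq> car U" using A(1) unfolding substruct_def by blast
  then have init: "partial_aut X0 \<iota>"
    unfolding partial_aut_def gen_A using X0 emb_restr_substruct[OF A(1) \<iota>(1)] \<iota>(2) by blast
  obtain X \<phi> where X: "X 0 = X0" "\<phi> 0 = \<iota>" "\<And>n. partial_aut (X n) (\<phi> n)"
      and chain: "map_chain (\<lambda>n. generated \<sigma> U (X n)) \<phi>"
      and cover: "car U \<subseteq> (\<Union>n. generated \<sigma> U (X n))"
      and onto: "car U \<subseteq> (\<Union>n. \<phi> n ` generated \<sigma> U (X n))"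
    by (rule partial_aut_chain[OF init]) (rule that)
  let ?\<alpha> = "limit_map (\<lambda>n. generated \<sigma> U (X n)) \<phi>"
  have "automorphism \<sigma> U ?\<alpha>"
  proof (rule automorphism_limit_map[OF chain cover])
    show "fun_of U f xs \<in> generated \<sigma> U (X n)"
      if "length xs = farity \<sigma> f" "set xs \<subseteq> generated \<sigma> U (X n)" for n f xs
      using that by (rule generated_fun_closed)
    show "emb \<sigma> (restr U (generated \<sigma> U (X n))) U (\<phi> n)" "generated \<sigma> U (X n) \<subseteq> car U" for n
      using X(3)[of n] generated_subset_car[OF wf_U] unfolding partial_aut_def by blast+
  qed (rule onto)
  moreover have "p (?\<alpha> x) = p x" if "x \<in> car U" for x
  proof -
    obtain n where "x \<in> generated \<sigma> U (X n)" using cover \<open>x \<in> car U\<close> by blast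
    then show ?thesis using map_chain.limit_map_eq[OF chain] X(3) unfolding partial_aut_def by simp
  qed
  moreover have "?\<alpha> x = \<iota> x" if "x \<in> car A" for x
    using that map_chain.limit_map_eq[OF chain, of x 0] X(1,2) gen_A by simp
  ultimately show ?thesis using that by blast
qed

lemma uh_retraction:
  assumes W: "wf_struct \<sigma> W" "countable (car W)" "embeds_locally \<sigma> W U"
  shows "uh_retraction \<sigma> U W p"
  unfolding uh_retraction_def retraction_def
proof (intro conjI allI impI)
  show "hom \<sigma> U W p" by (rule p_hom)
  obtain \<iota> where "emb \<sigma> W U \<iota>" "\<forall>x\<in>car W. p (\<iota> x) = id x"
    using lift[OF W emb_hom[OF iso_emb[OF iso_id]]] .
  then show "\<exists>\<iota>. hom \<sigma> W U \<iota> \<and> (\<forall>y\<in>car W. p (\<iota> y) = y)" using emb_hom by fastforce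
next
  fix A :: "(nat,'f,'r) struct" and h assume A: "in_cbar \<sigma> (Age \<sigma> U) A \<and> hom \<sigma> A W h"
  have "embeds_locally \<sigma> A U"
    using in_cbar_embeds_locally[of \<sigma> "Age \<sigma> U" A U] A unfolding Age_def by blast
  then obtain \<iota> where "emb \<sigma> A U \<iota>" "\<forall>x\<in>car A. p (\<iota> x) = h x"
    using lift A unfolding in_cbar_def by blast
  then show "\<exists>\<iota>. emb \<sigma> A U \<iota> \<and> (\<forall>x\<in>car A. h x = p (\<iota> x))" by auto
next
  fix A \<iota> assume "substruct \<sigma> A U \<and> fin_gen \<sigma> A \<and> emb \<sigma> A U \<iota> \<and> (\<forall>x\<in>car A. p (\<iota> x) = p x)"
  then show "\<exists>\<alpha>. automorphism \<sigma> U \<alpha> \<and> (\<forall>x\<in>car U. p (\<alpha> x) = p x) \<and> (\<forall>x\<in>car A. \<alpha> x = \<iota> x)"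
    using extend_to_aut by metis
qed

end

section \<open>Composing a universal homogeneous retraction with a retraction\<close>

locale retraction_composition =
  fixes \<sigma> :: "('f,'r) signature" and U :: "('u,'f,'r) struct" and V :: "('v,'f,'r) struct"
    and W :: "('w,'f,'r) struct" and r :: "'u \<Rightarrow> 'v" and s :: "'v \<Rightarrow> 'w" and j :: "'w \<Rightarrow> 'v"
  assumes wf_U: "wf_struct \<sigma> U" and countable_U: "countable (car U)"
    and homogeneous_U: "homogeneous \<sigma> U" and r_uh: "uh_retraction \<sigma> U V r"
    and countable_W: "countable (car W)"
    and s_hom: "hom \<sigma> V W s" and j_hom: "hom \<sigma> W V j" and s_j: "\<forall>y\<in>car W. s (j y) = y"
begin

lemma r_hom: "hom \<sigma> U V r"
  using r_uh unfolding uh_retraction_def retraction_def by blast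

lemma lift_along_r:
  assumes "Z \<subseteq> car U" "hom \<sigma> (restr U (generated \<sigma> U Z)) V k"
  obtains e where "emb \<sigma> (restr U (generated \<sigma> U Z)) U e" "\<forall>x\<in>generated \<sigma> U Z. r (e x) = k x"
proof -
  have G: "generated \<sigma> U Z \<subseteq> car U" using generated_subset_car[OF wf_U assms(1)] .
  then have "countable (car (restr U (generated \<sigma> U Z)))" using countable_subset[OF _ countable_U] by simp
  from uh_retraction_lift[OF r_uh wf_U wf_struct_restr_generated this embeds_locally_restr[OF G] assms(2)]
  obtain e where "emb \<sigma> (restr U (generated \<sigma> U Z)) U e"
    "\<forall>x\<in>car (restr U (generated \<sigma> U Z)). r (e x) = k x" .
  then show ?thesis using that by simp
qed

text \<open>Lift \<open>\<tau>\<close> on \<open>\<langle>X\<rangle>\<close> and \<open>h\<close> on \<open>\<langle>Z\<rangle>\<close> to embeddings \<open>e\<^sub>1, e\<^sub>2\<close> into \<open>U\<close> over \<open>r\<close>, via the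
  section \<open>j\<close>. The homogeneity of \<open>r\<close> yields \<open>\<alpha>\<close> with \<open>\<alpha> \<circ> e\<^sub>2 \<circ> g = e\<^sub>1\<close> on \<open>\<langle>Y\<rangle>\<close>, and the
  homogeneity of \<open>U\<close> yields \<open>\<beta>\<close> with \<open>\<beta> \<circ> e\<^sub>1 = id\<close> on \<open>\<langle>X\<rangle>\<close>. Then \<open>f = \<beta> \<circ> \<alpha> \<circ> e\<^sub>2\<close> and
  \<open>\<tau>' = s \<circ> r \<circ> \<beta>\<inverse>\<close> do the job.\<close>

lemma solve_extension_task:
  assumes X: "finite X" "X \<subseteq> car U" and \<tau>: "hom \<sigma> U W \<tau>"
    and Y: "finite Y" "Y \<subseteq> car U" "generated \<sigma> U Y \<subseteq> generated \<sigma> U X" and Z: "Z \<subseteq> car U"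
    and g: "emb \<sigma> (restr U (generated \<sigma> U Y)) (restr U (generated \<sigma> U Z)) g"
    and h: "hom \<sigma> (restr U (generated \<sigma> U Z)) W h"
    and hg: "\<forall>a\<in>generated \<sigma> U Y. h (g a) = \<tau> a"
  obtains \<tau>' f where "hom \<sigma> U W \<tau>'" "\<forall>x\<in>generated \<sigma> U X. \<tau>' x = \<tau> x"
    "emb \<sigma> (restr U (generated \<sigma> U Z)) U f" "\<forall>a\<in>generated \<sigma> U Y. f (g a) = a"
    "\<forall>b\<in>generated \<sigma> U Z. \<tau>' (f b) = h b"
proof -
  let ?S = "generated \<sigma> U X" and ?A = "generated \<sigma> U Y" and ?B = "generated \<sigma> U Z"
  have SU: "?S \<subseteq> car U" using generated_subset_car[OF wf_U X(2)] .
  obtain e1 where e1: "emb \<sigma> (restr U ?S) U e1" "\<forall>x\<in>?S. r (e1 x) = j (\<tau> x)"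
    using lift_along_r[OF X(2) hom_restr[OF hom_comp[OF \<tau> j_hom] SU]] by auto
  obtain e2 where e2: "emb \<sigma> (restr U ?B) U e2" "\<forall>b\<in>?B. r (e2 b) = j (h b)"
    using lift_along_r[OF Z hom_comp[OF h j_hom]] by auto
  have gB: "g a \<in> ?B" if "a \<in> ?A" for a using hom_closed[OF emb_hom[OF g]] that by simp
  have "emb \<sigma> (restr U ?A) U e1" using emb_restr[OF e1(1), of ?A] Y(3) by simp
  moreover have "\<forall>a\<in>?A. r ((e2 \<circ> g) a) = r (e1 a)" using e1(2) e2(2) gB hg Y(3) by auto
  ultimately obtain \<alpha> where \<alpha>: "automorphism \<sigma> U \<alpha>" "\<forall>x\<in>car U. r (\<alpha> x) = r x"
      "\<forall>a\<in>?A. \<alpha> ((e2 \<circ> g) a) = e1 a"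
    using uh_retraction_aut_between[OF r_uh wf_U Y(1,2) emb_comp[OF g e2(1)]] by blast
  obtain \<beta> where \<beta>: "automorphism \<sigma> U \<beta>" "\<forall>x\<in>?S. \<beta> (e1 x) = id x"
    using homogeneous_aut_between[OF homogeneous_U wf_U X e1(1) emb_id_restr[OF SU]] .
  define \<beta>' where "\<beta>' = inv_into (car U) \<beta>"
  have \<beta>'\<beta>: "\<beta>' (\<beta> x) = x" if "x \<in> car U" for x
    unfolding \<beta>'_def using automorphism_inv_into(2)[OF \<beta>(1) wf_U that] .
  have e1U: "e1 x \<in> car U" if "x \<in> ?S" for x using hom_closed[OF emb_hom[OF e1(1)]] that by simp
  have e2U: "\<alpha> (e2 b) \<in> car U" if "b \<in> ?B" for b
    using hom_closed[OF emb_hom[OF emb_comp[OF e2(1) automorphism_emb[OF \<alpha>(1)]]]] that by simp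
  have "hom \<sigma> U W (s \<circ> r \<circ> \<beta>')"
    unfolding \<beta>'_def using hom_comp[OF hom_comp[OF emb_hom[OF automorphism_inv_into(1)[OF \<beta>(1) wf_U]] r_hom] s_hom]
    by (simp add: comp_assoc)
  moreover have "\<forall>x\<in>?S. (s \<circ> r \<circ> \<beta>') x = \<tau> x"
    using \<beta>(2) \<beta>'\<beta>[OF e1U] e1(2) s_j hom_closed[OF \<tau>] SU by (auto simp: subset_iff)
  moreover have "emb \<sigma> (restr U ?B) U (\<beta> \<circ> \<alpha> \<circ> e2)"
    using emb_comp[OF emb_comp[OF e2(1) automorphism_emb[OF \<alpha>(1)]] automorphism_emb[OF \<beta>(1)]]
    by (simp add: comp_assoc)
  moreover have "\<forall>a\<in>?A. (\<beta> \<circ> \<alpha> \<circ> e2) (g a) = a" using \<alpha>(3) \<beta>(2) Y(3) by auto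
  moreover have "\<forall>b\<in>?B. (s \<circ> r \<circ> \<beta>') ((\<beta> \<circ> \<alpha> \<circ> e2) b) = h b"
    using \<beta>'\<beta>[OF e2U] \<alpha>(2) e2U e2(2) s_j hom_closed[OF h] hom_closed[OF emb_hom[OF e2(1)]] by simp
  ultimately show ?thesis using that by blast
qed

text \<open>A task \<open>(ys, zs, ws)\<close> is a finite code for an embedding \<open>g : \<langle>ys\<rangle> \<rightarrow> \<langle>zs\<rangle>\<close> sending \<open>ys\<close> to
  \<open>zs\<close> together with a homomorphism \<open>h : \<langle>zs\<rangle> \<rightarrow> W\<close> sending \<open>zs\<close> to \<open>ws\<close>. Both maps are
  determined by the lists, so countably many tasks encode all extension problems.\<close>

definition task_maps :: "'u list \<Rightarrow> 'u list \<Rightarrow> 'w list \<Rightarrow> ('u \<Rightarrow> 'u) \<Rightarrow> ('u \<Rightarrow> 'w) \<Rightarrow> bool" where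
  "task_maps ys zs ws g h \<longleftrightarrow>
     emb \<sigma> (restr U (generated \<sigma> U (set ys))) (restr U (generated \<sigma> U (set zs))) g \<and>
     (\<forall>i<length ys. g (ys ! i) = zs ! i) \<and>
     hom \<sigma> (restr U (generated \<sigma> U (set zs))) W h \<and> (\<forall>i<length zs. h (zs ! i) = ws ! i)"

lemma task_maps_unique:
  assumes "task_maps ys zs ws g h" "task_maps ys zs ws g' h'"
  shows "\<forall>a\<in>generated \<sigma> U (set ys). g' a = g a" "\<forall>b\<in>generated \<sigma> U (set zs). h' b = h b"
proof -
  have gy: "\<forall>y\<in>set ys. g' y = g y" and hz: "\<forall>z\<in>set zs. h' z = h z"
    using assms unfolding task_maps_def by (metis in_set_conv_nth)+
  have g: "emb \<sigma> (restr U (generated \<sigma> U (set ys))) (restr U (generated \<sigma> U (set zs))) g"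
    and g': "emb \<sigma> (restr U (generated \<sigma> U (set ys))) (restr U (generated \<sigma> U (set zs))) g'"
    and h: "hom \<sigma> (restr U (generated \<sigma> U (set zs))) W h"
    and h': "hom \<sigma> (restr U (generated \<sigma> U (set zs))) W h'"
    using assms unfolding task_maps_def by blast+
  show "\<forall>a\<in>generated \<sigma> U (set ys). g' a = g a"
    using hom_eq_on_generated[OF emb_hom[OF g'] emb_hom[OF g], of "set ys"] gy by simp
  show "\<forall>b\<in>generated \<sigma> U (set zs). h' b = h b"
    using hom_eq_on_generated[OF h' h, of "set zs"] hz by simp
qed

definition tasks :: "('u list \<times> 'u list \<times> 'w list) set" where
  "tasks = lists (car U) \<times> lists (car U) \<times> lists (car W)"

definition task :: "nat \<Rightarrow> 'u list \<times> 'u list \<times> 'w list" where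
  "task n = from_nat_into tasks (fst (prod_decode n))"

lemma task_in_tasks: "task n \<in> tasks"
  unfolding task_def by (rule from_nat_into) (auto simp: tasks_def)

lemma task_recurs:
  assumes "t \<in> tasks" obtains n where "n \<ge> m" "task n = t"
proof -
  have "countable tasks" unfolding tasks_def using countable_U countable_W
    by (intro countable_SIGMA countable_lists)
  then obtain k where "from_nat_into tasks k = t" using from_nat_into_surj[OF _ assms] by blast
  then have "task (prod_encode (k, m)) = t" unfolding task_def by simp
  then show ?thesis using that le_prod_encode_2 by blast
qed

lemma task_of_extension_problem:
  assumes X: "finite X1" "X0 \<subseteq> X1" "X1 \<subseteq> car U"
    and e: "emb \<sigma> (restr U (generated \<sigma> U X0)) U e" and h: "hom \<sigma> (restr U (generated \<sigma> U X1)) W h"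
  obtains ys zs ws g where "(ys, zs, ws) \<in> tasks" "task_maps ys zs ws g h" "set ys = e ` X0"
    "set zs = X1" "\<forall>x\<in>generated \<sigma> U X0. g (e x) = x"
proof -
  obtain xs0 xs1 where xs: "set xs0 = X0" "set xs1 = X1"
    using finite_list X(1) finite_subset[OF X(2,1)] by metis
  define ys zs g where "ys = map e xs0" and "zs = xs0 @ xs1" and "g = inv_into (generated \<sigma> U X0) e"
  have zs: "set zs = X1" using xs X(2) unfolding zs_def by auto
  have ge: "g (e x) = x" if "x \<in> generated \<sigma> U X0" for x
    using emb_inj_on[OF e] that unfolding g_def by simp
  have X0U: "generated \<sigma> U X0 \<subseteq> car U" using generated_subset_car[OF wf_U] X(2,3) by blast
  have "emb \<sigma> (restr U (generated \<sigma> U (e ` X0))) U (id \<circ> g)"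
    unfolding g_def by (rule emb_comp_inv_into_generated[OF e emb_id_restr[OF X0U]])
  moreover have "g ` generated \<sigma> U (e ` X0) \<subseteq> generated \<sigma> U (set zs)"
    using ge emb_image_generated[OF e, symmetric] generated_mono[OF X(2), of \<sigma> U] zs by auto
  ultimately have "emb \<sigma> (restr U (generated \<sigma> U (set ys))) (restr U (generated \<sigma> U (set zs))) g"
    using emb_restr_codomain unfolding ys_def xs(1)[symmetric] by fastforce
  moreover have "g (ys ! i) = zs ! i" if "i < length ys" for i
  proof -
    have "xs0 ! i \<in> generated \<sigma> U X0"
      using nth_mem[of i xs0] subset_generated[of X0 \<sigma> U] xs(1) that unfolding ys_def by auto
    then show ?thesis using that ge unfolding ys_def zs_def by (simp add: nth_append)
  qed
  moreover have "hom \<sigma> (restr U (generated \<sigma> U (set zs))) W h" using h zs by simp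
  ultimately have "task_maps ys zs (map h zs) g h" unfolding task_maps_def by simp
  moreover have "e ` X0 \<subseteq> car U"
    using hom_closed[OF emb_hom[OF e]] subset_generated[of X0 \<sigma> U] by auto
  moreover have "h ` X1 \<subseteq> car W"
    using hom_closed[OF h] subset_generated[of X1 \<sigma> U] by auto
  ultimately show ?thesis
    using that[of ys zs "map h zs" g] zs ge X(3) xs(1) unfolding tasks_def ys_def by (auto simp: lists_eq_set)
qed

definition applicable :: "'u list \<Rightarrow> 'u list \<Rightarrow> 'w list \<Rightarrow> 'u set \<Rightarrow> ('u \<Rightarrow> 'w) \<Rightarrow> bool" where
  "applicable ys zs ws X \<tau> \<longleftrightarrow> (\<exists>g h. task_maps ys zs ws g h \<and> set ys \<subseteq> generated \<sigma> U X \<and>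
     (\<forall>a\<in>generated \<sigma> U (set ys). h (g a) = \<tau> a))"

definition solved :: "'u list \<Rightarrow> 'u list \<Rightarrow> 'w list \<Rightarrow> 'u set \<Rightarrow> ('u \<Rightarrow> 'w) \<Rightarrow> bool" where
  "solved ys zs ws X \<tau> \<longleftrightarrow> (\<forall>g h. task_maps ys zs ws g h \<longrightarrow>
     (\<exists>f. emb \<sigma> (restr U (generated \<sigma> U (set zs))) U f \<and> (\<forall>a\<in>generated \<sigma> U (set ys). f (g a) = a) \<and>
          f ` set zs \<subseteq> X \<and> (\<forall>b\<in>generated \<sigma> U (set zs). \<tau> (f b) = h b)))"

definition stage :: "'u set \<Rightarrow> ('u \<Rightarrow> 'w) \<Rightarrow> bool" where
  "stage X \<tau> \<longleftrightarrow> finite X \<and> X \<subseteq> car U \<and> hom \<sigma> U W \<tau>"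

definition stage_step :: "nat \<Rightarrow> 'u set \<Rightarrow> ('u \<Rightarrow> 'w) \<Rightarrow> 'u set \<Rightarrow> ('u \<Rightarrow> 'w) \<Rightarrow> bool" where
  "stage_step n X \<tau> X' \<tau>' \<longleftrightarrow> X \<subseteq> X' \<and> (\<forall>x\<in>generated \<sigma> U X. \<tau>' x = \<tau> x) \<and>
     {from_nat_into (car U) n} \<inter> car U \<subseteq> X' \<and>
     (case task n of (ys, zs, ws) \<Rightarrow> applicable ys zs ws X \<tau> \<longrightarrow> solved ys zs ws X' \<tau>')"

lemma stage_step_exists:
  assumes "stage X \<tau>"
  shows "\<exists>X' \<tau>'. stage X' \<tau>' \<and> stage_step n X \<tau> X' \<tau>'"
proof -
  obtain ys zs ws where t: "task n = (ys, zs, ws)" by (cases "task n") auto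
  have lists: "set ys \<subseteq> car U" "set zs \<subseteq> car U"
    using task_in_tasks[of n] unfolding t tasks_def by (auto simp: lists_eq_set)
  have X: "finite X" "X \<subseteq> car U" "hom \<sigma> U W \<tau>" using assms unfolding stage_def by auto
  let ?new = "{from_nat_into (car U) n} \<inter> car U"
  show ?thesis
  proof (cases "applicable ys zs ws X \<tau>")
    case True
    then obtain g h where gh: "task_maps ys zs ws g h" "set ys \<subseteq> generated \<sigma> U X"
        "\<forall>a\<in>generated \<sigma> U (set ys). h (g a) = \<tau> a"
      unfolding applicable_def by blast
    have g: "emb \<sigma> (restr U (generated \<sigma> U (set ys))) (restr U (generated \<sigma> U (set zs))) g"
      and h: "hom \<sigma> (restr U (generated \<sigma> U (set zs))) W h"
      using gh(1) unfolding task_maps_def by blast+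
    obtain \<tau>' f where \<tau>'f: "hom \<sigma> U W \<tau>'" "\<forall>x\<in>generated \<sigma> U X. \<tau>' x = \<tau> x"
        "emb \<sigma> (restr U (generated \<sigma> U (set zs))) U f" "\<forall>a\<in>generated \<sigma> U (set ys). f (g a) = a"
        "\<forall>b\<in>generated \<sigma> U (set zs). \<tau>' (f b) = h b"
      using solve_extension_task[OF X finite_set lists(1) generated_minimal[OF gh(2)] lists(2) g h gh(3)] .
    have "f ` set zs \<subseteq> car U"
      using hom_closed[OF emb_hom[OF \<tau>'f(3)]] subset_generated[of "set zs" \<sigma> U] by auto
    then have "stage (X \<union> f ` set zs \<union> ?new) \<tau>'" using X \<tau>'f(1) unfolding stage_def by auto
    moreover have "solved ys zs ws (X \<union> f ` set zs \<union> ?new) \<tau>'"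
      unfolding solved_def
    proof (intro allI impI)
      fix g' h' assume "task_maps ys zs ws g' h'"
      from task_maps_unique[OF gh(1) this]
      show "\<exists>f'. emb \<sigma> (restr U (generated \<sigma> U (set zs))) U f' \<and> (\<forall>a\<in>generated \<sigma> U (set ys). f' (g' a) = a) \<and>
          f' ` set zs \<subseteq> X \<union> f ` set zs \<union> ?new \<and> (\<forall>b\<in>generated \<sigma> U (set zs). \<tau>' (f' b) = h' b)"
        using \<tau>'f(3-5) by (intro exI[of _ f]) auto
    qed
    ultimately show ?thesis using \<tau>'f(2) unfolding stage_step_def t by blast
  next
    case False
    then have "stage (X \<union> ?new) \<tau> \<and> stage_step n X \<tau> (X \<union> ?new) \<tau>"
      using X unfolding stage_def stage_step_def t by auto
    then show ?thesis by blast
  qed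
qed

context
  fixes X :: "nat \<Rightarrow> 'u set" and \<tau> :: "nat \<Rightarrow> 'u \<Rightarrow> 'w"
  assumes stages: "\<And>n. stage (X n) (\<tau> n)"
    and steps: "\<And>n. stage_step n (X n) (\<tau> n) (X (Suc n)) (\<tau> (Suc n))"
begin

lemma stages_chain: "map_chain (\<lambda>n. generated \<sigma> U (X n)) \<tau>"
proof
  show "generated \<sigma> U (X n) \<subseteq> generated \<sigma> U (X (Suc n))" for n
    using steps[of n] generated_mono[of "X n" "X (Suc n)" \<sigma> U] unfolding stage_step_def by blast
  show "\<tau> (Suc n) x = \<tau> n x" if "x \<in> generated \<sigma> U (X n)" for n x
    using steps[of n] that unfolding stage_step_def by blast
qed

lemma stages_cover: "car U \<subseteq> (\<Union>n. generated \<sigma> U (X n))"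
proof
  fix x assume x: "x \<in> car U"
  then obtain i where "from_nat_into (car U) i = x" using from_nat_into_surj[OF countable_U] by blast
  then have "x \<in> X (Suc i)" using steps[of i] x unfolding stage_step_def by blast
  then show "x \<in> (\<Union>n. generated \<sigma> U (X n))" using subset_generated[of "X (Suc i)" \<sigma> U] by blast
qed

lemma hom_limit_stages: "hom \<sigma> U W (limit_map (\<lambda>n. generated \<sigma> U (X n)) \<tau>)"
proof (rule map_chain.hom_limit_map[OF stages_chain stages_cover])
  show "fun_of U f xs \<in> generated \<sigma> U (X n)" if "length xs = farity \<sigma> f" "set xs \<subseteq> generated \<sigma> U (X n)"
    for n f xs using that by (rule generated_fun_closed)
  show "hom \<sigma> (restr U (generated \<sigma> U (X n))) W (\<tau> n)" for n
    using stages[of n] hom_restr generated_subset_car[OF wf_U] unfolding stage_def by blast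
qed

lemma compatible_task_solved:
  assumes t: "(ys, zs, ws) \<in> tasks" "task_maps ys zs ws g h"
    and hg: "\<forall>a\<in>generated \<sigma> U (set ys). h (g a) = limit_map (\<lambda>n. generated \<sigma> U (X n)) \<tau> a"
  obtains n where "solved ys zs ws (X (Suc n)) (\<tau> (Suc n))"
proof -
  interpret map_chain "\<lambda>n. generated \<sigma> U (X n)" \<tau> by (rule stages_chain)
  have "set ys \<subseteq> car U" using t(1) unfolding tasks_def by (auto simp: lists_eq_set)
  then obtain m where "set ys \<subseteq> generated \<sigma> U (X m)"
    using finite_subset_chain[of "set ys"] stages_cover by blast
  moreover obtain n where n: "n \<ge> m" "task n = (ys, zs, ws)" using task_recurs[OF t(1)] .
  ultimately have ys_n: "set ys \<subseteq> generated \<sigma> U (X n)" using chain_mono_le[OF n(1)] by blast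
  then have "\<forall>a\<in>generated \<sigma> U (set ys). h (g a) = \<tau> n a"
    using hg limit_map_eq generated_minimal[OF ys_n] by auto
  then have "applicable ys zs ws (X n) (\<tau> n)" using t(2) ys_n unfolding applicable_def by blast
  then have "solved ys zs ws (X (Suc n)) (\<tau> (Suc n))"
    using steps[of n] unfolding stage_step_def n(2) by simp
  then show ?thesis by (rule that)
qed

lemma extension_property_limit_stages:
  "has_extension_property \<sigma> U W (limit_map (\<lambda>n. generated \<sigma> U (X n)) \<tau>)"
  unfolding has_extension_property_def
proof (intro allI impI, elim conjE)
  let ?p = "limit_map (\<lambda>n. generated \<sigma> U (X n)) \<tau>"
  interpret map_chain "\<lambda>n. generated \<sigma> U (X n)" \<tau> by (rule stages_chain)
  fix X0 X1 e h
  assume X: "finite X1" "X0 \<subseteq> X1" "X1 \<subseteq> car U" and e: "emb \<sigma> (restr U (generated \<sigma> U X0)) U e"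
    and h: "hom \<sigma> (restr U (generated \<sigma> U X1)) W h" and eh: "\<forall>x\<in>generated \<sigma> U X0. ?p (e x) = h x"
  obtain ys zs ws g where t: "(ys, zs, ws) \<in> tasks" "task_maps ys zs ws g h" "set ys = e ` X0"
      "set zs = X1" "\<forall>x\<in>generated \<sigma> U X0. g (e x) = x"
    using task_of_extension_problem[OF X e h] .
  have ys_gen: "generated \<sigma> U (set ys) = e ` generated \<sigma> U X0"
    using emb_image_generated[OF e] t(3) by simp
  then have "\<forall>a\<in>generated \<sigma> U (set ys). h (g a) = ?p a" using t(5) eh by auto
  then obtain n where "solved ys zs ws (X (Suc n)) (\<tau> (Suc n))"
    using compatible_task_solved[OF t(1,2)] by blast
  then obtain f where f: "emb \<sigma> (restr U (generated \<sigma> U (set zs))) U f"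
      "\<forall>a\<in>generated \<sigma> U (set ys). f (g a) = a" "f ` set zs \<subseteq> X (Suc n)"
      "\<forall>b\<in>generated \<sigma> U (set zs). \<tau> (Suc n) (f b) = h b"
    using t(2) unfolding solved_def by blast
  have "f ` generated \<sigma> U (set zs) \<subseteq> generated \<sigma> U (X (Suc n))"
    using emb_image_generated[OF f(1)] generated_mono[OF f(3)] by simp
  then have "\<forall>b\<in>generated \<sigma> U X1. ?p (f b) = h b" using f(4) limit_map_eq t(4) by auto
  moreover have "\<forall>x\<in>generated \<sigma> U X0. f x = e x" using f(2) t(5) unfolding ys_gen by auto
  ultimately show "\<exists>f. emb \<sigma> (restr U (generated \<sigma> U X1)) U f \<and> (\<forall>x\<in>generated \<sigma> U X0. f x = e x) \<and>
      (\<forall>x\<in>generated \<sigma> U X1. ?p (f x) = h x)"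
    using f(1) t(4) by blast
qed

end

lemma extension_property_hom_exists:
  obtains p where "hom \<sigma> U W p" "has_extension_property \<sigma> U W p"
proof -
  have "\<exists>st. \<forall>n. stage (fst (st n)) (snd (st n)) \<and>
      stage_step n (fst (st n)) (snd (st n)) (fst (st (Suc n))) (snd (st (Suc n)))"
  proof (rule dependent_nat_choice)
    show "\<exists>st. stage (fst st) (snd st)"
      using hom_comp[OF r_hom s_hom] unfolding stage_def by (intro exI[of _ "({}, s \<circ> r)"]) simp
    show "\<exists>st'. stage (fst st') (snd st') \<and> stage_step n (fst st) (snd st) (fst st') (snd st')"
      if "stage (fst st) (snd st)" for st n
      using stage_step_exists[OF that] by fastforce
  qed
  then obtain st where st: "\<And>n. stage (fst (st n)) (snd (st n))"
    "\<And>n. stage_step n (fst (st n)) (snd (st n)) (fst (st (Suc n))) (snd (st (Suc n)))"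
    by blast
  show ?thesis
    using that hom_limit_stages[OF st] extension_property_limit_stages[OF st] .
qed

end

theorem proposition4p5:
  fixes \<sigma> :: "('f,'r) signature"
    and C :: "(nat,'f,'r) struct set"
    and U :: "('u,'f,'r) struct"
    and V :: "('v,'f,'r) struct"
    and W :: "('w,'f,'r) struct"
    and r :: "'u \<Rightarrow> 'v" and s :: "'v \<Rightarrow> 'w"
  assumes "fraisse_class \<sigma> C"
    and "fraisse_limit \<sigma> C U"
    and "in_cbar \<sigma> C V"
    and "in_cbar \<sigma> C W"
    and "uh_retraction \<sigma> U V r"
    and "retraction \<sigma> V W s"
  shows "\<exists>s'. uh_retraction \<sigma> U W s'"
proof -
  obtain j where j: "hom \<sigma> W V j" "\<forall>y\<in>car W. s (j y) = y" and s: "hom \<sigma> V W s"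
    using assms(6) unfolding retraction_def by blast
  have U: "wf_struct \<sigma> U" "countable (car U)" "homogeneous \<sigma> U"
    and C_in_U: "\<forall>A\<in>C. \<exists>B. substruct \<sigma> B U \<and> fin_gen \<sigma> B \<and> isomorphic \<sigma> A B"
    using assms(2) unfolding fraisse_limit_def by blast+
  have W: "wf_struct \<sigma> W" "countable (car W)" using assms(4) unfolding in_cbar_def by blast+
  interpret retraction_composition \<sigma> U V W r s j
    using U assms(5) W(2) s j by unfold_locales
  obtain p where p: "hom \<sigma> U W p" "has_extension_property \<sigma> U W p"
    by (rule extension_property_hom_exists)
  interpret extension_property \<sigma> U W p using U p by unfold_locales
  have "embeds_locally \<sigma> W U" using in_cbar_embeds_locally[OF assms(4)] C_in_U by blast
  then show ?thesis using uh_retraction[OF W] by blast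
qed

end
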